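(* Let $W\in\mathcal{P}(\mathcal{Y}|\mathcal{X})$ be a symmetric channel with $R_{\mathrm{cr}}<C(W)$ and let $R_\infty<R<C(W)$. Then: (i) $\mathrm{E}_{\mathrm{SP}}(R)=\mathrm{E}_{\mathrm{SP}}(R,U_{\mathcal{X}})=\tilde{\mathrm{E}}_{\mathrm{SP}}(R,U_{\mathcal{X}})=\tilde{\mathrm{E}}_{\mathrm{SP}}(R)$. (ii) For every $\rho\ge0$ and every $x\in\mathcal{X}$, $$\sum_{y}W(y|x)^{\frac1{1+\rho}}\Big(\sum_zU_{\mathcal{X}}(z)W(y|z)^{\frac1{1+\rho}}\Big)^{\rho}=\sum_y\Big(\sum_zU_{\mathcal{X}}(z)W(y|z)^{\frac1{1+\rho}}\Big)^{1+\rho}.$$ (iii) $\rho_R$ attains the supremum in $\tilde{\mathrm{E}}_{\mathrm{SP}}(R,U_{\mathcal{X}})=\sup_{\rho\ge0}\{\mathrm{E}_{\mathrm{o}}(\rho,U_{\mathcal{X}})-\rho R\}$. (iv) $$\mathrm{E}_{\mathrm{SP}}(R,U_{\mathcal{X}})=\sup_{\rho\ge0}\min_{q\in\mathcal{P}(\mathcal{Y})}\Big\{-\rho R-(1+\rho)\sum_xU_{\mathcal{X}}(x)\ln\sum_yW(y|x)^{\frac1{1+\rho}}q(y)^{\frac{\rho}{1+\rho}}\Big\},$$ and $(\rho_R,q_R)$ is the unique saddle-point of this expression.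
   Context: $\mathcal{X},\mathcal{Y}$ finite; $U_{\mathcal{X}}$ uniform on $\mathcal{X}$. Symmetric (Gallager): outputs can be partitioned into subsets such that within each subset each row of the transition submatrix is a permutation of each other row and each column a permutation of each other column. $\mathrm{E}_{\mathrm{SP}}(R,Q)=\min_{V:I(Q;V)\le R}D(V\|W|Q)$ with $D(V\|W|Q)=\sum_xQ(x)D(V(\cdot|x)\|W(\cdot|x))$; $\mathrm{E}_{\mathrm{SP}}(R)=\max_Q\mathrm{E}_{\mathrm{SP}}(R,Q)$; $\mathrm{E}_{\mathrm{o}}(\rho,Q)=-\ln\sum_y(\sum_xQ(x)W(y|x)^{1/(1+\rho)})^{1+\rho}$; $\tilde{\mathrm{E}}_{\mathrm{SP}}(R,Q)=\sup_{\rho\ge0}\{\mathrm{E}_{\mathrm{o}}(\rho,Q)-\rho R\}$; $\tilde{\mathrm{E}}_{\mathrm{SP}}(R)=\max_Q\tilde{\mathrm{E}}_{\mathrm{SP}}(R,Q)$. $R_\infty$: largest rate below which $\mathrm{E}_{\mathrm{SP}}=\infty$; $R_{\mathrm{cr}}$: critical rate; $C(W)$: capacity. $\rho_R=-\frac{\partial}{\partial r}\mathrm{E}_{\mathrm{SP}}(r,U_{\mathcal{X}})\big|_{r=R}$ (this derivative exists and is positive), and $q_R(y)=\frac{(\sum_xU_{\mathcal{X}}(x)W(y|x)^{1/(1+\rho_R)})^{1+\rho_R}}{\sum_b(\sum_aU_{\mathcal{X}}(a)W(b|a)^{1/(1+\rho_R)})^{1+\rho_R}}$. *)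

theory Defs
  imports "HOL-Analysis.Analysis"
begin

text \<open>Channels W : X -> P(Y) over finite alphabets, written W x y = W(y|x).
  Probability distributions on a finite type are nonnegative functions summing to 1.\<close>

definition pdist :: "('a::finite \<Rightarrow> real) \<Rightarrow> bool" where
  "pdist P \<longleftrightarrow> (\<forall>a. 0 \<le> P a) \<and> (\<Sum>a\<in>UNIV. P a) = 1"

definition channel :: "('x::finite \<Rightarrow> 'y::finite \<Rightarrow> real) \<Rightarrow> bool" where
  "channel W \<longleftrightarrow> (\<forall>x. pdist (W x))"

definition unif :: "'a::finite \<Rightarrow> real" where
  "unif a = 1 / real CARD('a)"

text \<open>Power with the convention t^0 = 1 (also for t = 0); Isabelle's powr has 0 powr 0 = 0.\<close>
definition rpow :: "real \<Rightarrow> real \<Rightarrow> real" where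
  "rpow t a = (if a = 0 then 1 else t powr a)"

definition symmetric_channel :: "('x::finite \<Rightarrow> 'y::finite \<Rightarrow> real) \<Rightarrow> bool" where
  "symmetric_channel W \<longleftrightarrow>
     (\<exists>P. partition_on (UNIV :: 'y set) P \<and>
       (\<forall>B\<in>P.
          (\<forall>x x'. \<exists>\<sigma>. bij_betw \<sigma> B B \<and> (\<forall>y\<in>B. W x' y = W x (\<sigma> y))) \<and>
          (\<forall>y\<in>B. \<forall>y'\<in>B. \<exists>\<pi>::'x \<Rightarrow> 'x. bij \<pi> \<and> (\<forall>x. W x y' = W (\<pi> x) y))))"

definition mutual_info :: "('x::finite \<Rightarrow> real) \<Rightarrow> ('x \<Rightarrow> 'y::finite \<Rightarrow> real) \<Rightarrow> real" where
  "mutual_info Q V = (\<Sum>x\<in>UNIV. \<Sum>y\<in>UNIV.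
      if Q x * V x y = 0 then 0
      else Q x * V x y * ln (V x y / (\<Sum>x'\<in>UNIV. Q x' * V x' y)))"

definition kl_div :: "('y::finite \<Rightarrow> real) \<Rightarrow> ('y \<Rightarrow> real) \<Rightarrow> ereal" where
  "kl_div p q = (\<Sum>y\<in>UNIV.
      if p y = 0 then 0 else if q y = 0 then \<infinity> else ereal (p y * ln (p y / q y)))"

text \<open>Conditional divergence D(V||W|Q) = sum_x Q(x) D(V(.|x)||W(.|x)) (with 0 * \<infinity> = 0).\<close>
definition cond_div ::
  "('x::finite \<Rightarrow> 'y::finite \<Rightarrow> real) \<Rightarrow> ('x \<Rightarrow> 'y \<Rightarrow> real) \<Rightarrow> ('x \<Rightarrow> real) \<Rightarrow> ereal" where
  "cond_div V W Q = (\<Sum>x\<in>UNIV. ereal (Q x) * kl_div (V x) (W x))"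

definition E_SP_Q :: "('x::finite \<Rightarrow> 'y::finite \<Rightarrow> real) \<Rightarrow> real \<Rightarrow> ('x \<Rightarrow> real) \<Rightarrow> ereal" where
  "E_SP_Q W R Q = (INF V \<in> {V. channel V \<and> mutual_info Q V \<le> R}. cond_div V W Q)"

definition E_SP :: "('x::finite \<Rightarrow> 'y::finite \<Rightarrow> real) \<Rightarrow> real \<Rightarrow> ereal" where
  "E_SP W R = (SUP Q \<in> {Q. pdist Q}. E_SP_Q W R Q)"

definition E_o :: "('x::finite \<Rightarrow> 'y::finite \<Rightarrow> real) \<Rightarrow> real \<Rightarrow> ('x \<Rightarrow> real) \<Rightarrow> real" where
  "E_o W \<rho> Q = - ln (\<Sum>y\<in>UNIV. (\<Sum>x\<in>UNIV. Q x * W x y powr (1 / (1 + \<rho>))) powr (1 + \<rho>))"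

definition E_SP_tilde_Q :: "('x::finite \<Rightarrow> 'y::finite \<Rightarrow> real) \<Rightarrow> real \<Rightarrow> ('x \<Rightarrow> real) \<Rightarrow> ereal" where
  "E_SP_tilde_Q W R Q = (SUP \<rho> \<in> {0..}. ereal (E_o W \<rho> Q - \<rho> * R))"

definition E_SP_tilde :: "('x::finite \<Rightarrow> 'y::finite \<Rightarrow> real) \<Rightarrow> real \<Rightarrow> ereal" where
  "E_SP_tilde W R = (SUP Q \<in> {Q. pdist Q}. E_SP_tilde_Q W R Q)"

definition capacity :: "('x::finite \<Rightarrow> 'y::finite \<Rightarrow> real) \<Rightarrow> real" where
  "capacity W = (SUP Q \<in> {Q. pdist Q}. mutual_info Q W)"

definition R_inf :: "('x::finite \<Rightarrow> 'y::finite \<Rightarrow> real) \<Rightarrow> real" where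
  "R_inf W = Sup {R. E_SP W R = \<infinity>}"

text \<open>Critical rate: the largest rate at which E_SP(R) has a supporting line of slope -1,
  i.e. the largest minimiser of E_SP(R) + R.\<close>
definition R_cr :: "('x::finite \<Rightarrow> 'y::finite \<Rightarrow> real) \<Rightarrow> real" where
  "R_cr W = Sup {R. \<forall>R'. E_SP W R + ereal R \<le> E_SP W R' + ereal R'}"

definition rho_R :: "('x::finite \<Rightarrow> 'y::finite \<Rightarrow> real) \<Rightarrow> real \<Rightarrow> real" where
  "rho_R W R = - deriv (\<lambda>r. real_of_ereal (E_SP_Q W r unif)) R"

definition q_R :: "('x::finite \<Rightarrow> 'y::finite \<Rightarrow> real) \<Rightarrow> real \<Rightarrow> 'y \<Rightarrow> real" where
  "q_R W R y =
     (\<Sum>x\<in>UNIV. unif x * W x y powr (1 / (1 + rho_R W R))) powr (1 + rho_R W R) /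
     (\<Sum>b\<in>UNIV. (\<Sum>a\<in>UNIV. unif a * W a b powr (1 / (1 + rho_R W R))) powr (1 + rho_R W R))"

text \<open>The objective in (iv): -rho R - (1+rho) sum_x U(x) ln sum_y W(y|x)^(1/(1+rho)) q(y)^(rho/(1+rho)),
  with ln 0 = -\<infinity> (so the objective is +\<infinity> then).\<close>
definition saddle_obj ::
  "('x::finite \<Rightarrow> 'y::finite \<Rightarrow> real) \<Rightarrow> real \<Rightarrow> real \<Rightarrow> ('y \<Rightarrow> real) \<Rightarrow> ereal" where
  "saddle_obj W R \<rho> q =
     (if \<exists>x. (\<Sum>y\<in>UNIV. W x y powr (1 / (1 + \<rho>)) * rpow (q y) (\<rho> / (1 + \<rho>))) = 0 then \<infinity>
      else ereal (- \<rho> * R - (1 + \<rho>) * (\<Sum>x\<in>UNIV. (unif :: 'x \<Rightarrow> real) x *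
              ln (\<Sum>y\<in>UNIV. W x y powr (1 / (1 + \<rho>)) * rpow (q y) (\<rho> / (1 + \<rho>))))))"

definition is_saddle ::
  "('x::finite \<Rightarrow> 'y::finite \<Rightarrow> real) \<Rightarrow> real \<Rightarrow> real \<Rightarrow> ('y \<Rightarrow> real) \<Rightarrow> bool" where
  "is_saddle W R \<rho>s qs \<longleftrightarrow> 0 \<le> \<rho>s \<and> pdist qs \<and>
     (\<forall>\<rho>\<ge>0. \<forall>q. pdist q \<longrightarrow>
        saddle_obj W R \<rho> qs \<le> saddle_obj W R \<rho>s qs \<and> saddle_obj W R \<rho>s qs \<le> saddle_obj W R \<rho>s q)"

end

(* For a symmetric channel the uniform input U is optimal at every slope rho. The weights
   alpha_rho(y) = sum_x U(x) W(y|x)^(1/(1+rho)) are constant on the blocks of the output partition,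
   so all rows of the tilted channel V_rho(y|x) ~ W(y|x)^(1/(1+rho)) alpha_rho(y)^rho have the same
   normaliser (this is (ii)) and the same divergence r(rho) from the tilted output
   q_rho ~ alpha_rho^(1+rho). Hence I(Q;V_rho) <= r(rho) for every input Q and
   D(V_rho||W|Q) = E_o(rho,U) - rho r(rho). In the other direction, the identity
   D(V||W|Q) + rho I(Q;V) = (1+rho) sum_x Q(x) D(V_x || W_x^(1/(1+rho)) q^(rho/(1+rho))), q the output
   of V, together with Gibbs' and Hoelder's inequalities gives E_o(rho,Q) - rho I(Q;V) <= D(V||W|Q).
   So r is a supergradient of the concave function E_o(.,U), decreasing and continuous from
   r(0) = C(W). A maximiser rho0 of E_o(rho,U) - rho R exists because E_SP(R) < oo above R_oo, it
   satisfies r(rho0) = R, and V_rho0 attains all four exponents in (i). Two maximisers would make the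
   tilts agree at two slopes and hence E_o(.,U) linear with slope R, impossible above R_oo. Uniqueness
   makes rho0 continuous in R, so the envelope theorem gives rho_R = rho0. Gibbs' inequality shows
   that (rho0, q_rho0) is a saddle point, and its equality case that it is the only one. *)

theory Submission
  imports Defs
begin

section \<open>Symmetric channels\<close>

definition constant_on_blocks :: "'y set set \<Rightarrow> ('y \<Rightarrow> 'a) \<Rightarrow> bool" where
  "constant_on_blocks P h \<longleftrightarrow> (\<forall>B\<in>P. \<forall>y\<in>B. \<forall>y'\<in>B. h y = h y')"

definition symmetric_partition :: "('x::finite \<Rightarrow> 'y::finite \<Rightarrow> real) \<Rightarrow> 'y set set \<Rightarrow> bool" where
  "symmetric_partition W P \<longleftrightarrow> partition_on (UNIV :: 'y set) P \<and>
     (\<forall>B\<in>P.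
        (\<forall>x x'. \<exists>\<sigma>. bij_betw \<sigma> B B \<and> (\<forall>y\<in>B. W x' y = W x (\<sigma> y))) \<and>
        (\<forall>y\<in>B. \<forall>y'\<in>B. \<exists>\<pi>::'x \<Rightarrow> 'x. bij \<pi> \<and> (\<forall>x. W x y' = W (\<pi> x) y)))"

lemma symmetric_channel_iff: "symmetric_channel W \<longleftrightarrow> (\<exists>P. symmetric_partition W P)"
  unfolding symmetric_channel_def symmetric_partition_def by blast

lemma sum_UNIV_partition:
  fixes f :: "'y::finite \<Rightarrow> 'a::comm_monoid_add"
  assumes "partition_on UNIV P"
  shows "(\<Sum>y\<in>UNIV. f y) = (\<Sum>B\<in>P. \<Sum>y\<in>B. f y)"
proof -
  have "UNIV = \<Union>P" using partition_onD1[OF assms] by simp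
  moreover have "disjoint P" using partition_onD2[OF assms] .
  ultimately show ?thesis
    using sum.Union_disjoint[of P f] by (auto simp: disjoint_def)
qed

lemma row_sum_independent_of_input:
  assumes SP: "symmetric_partition W P" and h: "constant_on_blocks P h"
  shows "(\<Sum>y\<in>UNIV. F (W x y) (h y)) = (\<Sum>y\<in>UNIV. F (W x' y) (h y))"
proof -
  have P: "partition_on UNIV P" using SP unfolding symmetric_partition_def by blast
  have block: "(\<Sum>y\<in>B. F (W x y) (h y)) = (\<Sum>y\<in>B. F (W x' y) (h y))" if B: "B \<in> P" for B
  proof -
    obtain \<sigma> where \<sigma>: "bij_betw \<sigma> B B" "\<forall>y\<in>B. W x' y = W x (\<sigma> y)"
      using SP B unfolding symmetric_partition_def by blast
    have "\<forall>y\<in>B. h (\<sigma> y) = h y"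
      using h B \<sigma>(1) unfolding constant_on_blocks_def bij_betw_def by blast
    then have "(\<Sum>y\<in>B. F (W x' y) (h y)) = (\<Sum>y\<in>B. F (W x (\<sigma> y)) (h (\<sigma> y)))"
      using \<sigma>(2) by (intro sum.cong) auto
    also have "\<dots> = (\<Sum>y\<in>B. F (W x y) (h y))"
      using sum.reindex_bij_betw[OF \<sigma>(1), of "\<lambda>y. F (W x y) (h y)"] by simp
    finally show ?thesis by simp
  qed
  show ?thesis
    unfolding sum_UNIV_partition[OF P] using block by (rule sum.cong[OF refl])
qed

lemma column_sum_constant_on_blocks:
  assumes "symmetric_partition W P"
  shows "constant_on_blocks P (\<lambda>y. \<Sum>x\<in>UNIV. G (W x y))"
  unfolding constant_on_blocks_def
proof (intro ballI)
  fix B y y' assume "B \<in> P" "y \<in> B" "y' \<in> B"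
  then obtain \<pi> :: "'a \<Rightarrow> 'a" where \<pi>: "bij \<pi>" "\<forall>x. W x y' = W (\<pi> x) y"
    using assms unfolding symmetric_partition_def by blast
  have "(\<Sum>x\<in>UNIV. G (W x y')) = (\<Sum>x\<in>UNIV. G (W (\<pi> x) y))" using \<pi>(2) by simp
  also have "\<dots> = (\<Sum>x\<in>UNIV. G (W x y))"
    using sum.reindex_bij_betw[OF \<pi>(1), of "\<lambda>x. G (W x y)"] by simp
  finally show "(\<Sum>x\<in>UNIV. G (W x y)) = (\<Sum>x\<in>UNIV. G (W x y'))" by simp
qed

section \<open>Relative entropy and mutual information\<close>

lemma pdist_nonneg: "pdist Q \<Longrightarrow> 0 \<le> Q x"
  unfolding pdist_def by blast

lemma pdist_sum: "pdist Q \<Longrightarrow> (\<Sum>x\<in>UNIV. Q x) = 1"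
  unfolding pdist_def by blast

lemma pdist_obtain_pos:
  assumes "pdist Q"
  obtains x where "0 < Q x"
proof -
  obtain x where "Q x \<noteq> 0"
    using pdist_sum[OF assms] sum.not_neutral_contains_not_neutral[of Q UNIV] by auto
  then show thesis using that pdist_nonneg[OF assms, of x] by (simp add: order_less_le)
qed

lemma channel_nonneg: "channel W \<Longrightarrow> 0 \<le> W x y"
  unfolding channel_def pdist_def by blast

lemma channel_sum: "channel W \<Longrightarrow> (\<Sum>y\<in>UNIV. W x y) = 1"
  unfolding channel_def pdist_def by blast

lemma channel_obtain_pos:
  assumes "channel W"
  obtains y where "0 < W x y"
  using pdist_obtain_pos assms unfolding channel_def by blast

lemma unif_pos: "0 < (unif :: 'x::finite \<Rightarrow> real) x"
  unfolding unif_def by simp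

lemma pdist_unif: "pdist (unif :: 'x::finite \<Rightarrow> real)"
  unfolding pdist_def unif_def by (simp add: less_imp_le)

lemma sum_unif_mult_const: "(\<Sum>x\<in>UNIV. (unif :: 'x::finite \<Rightarrow> real) x * c) = c"
  using pdist_sum[OF pdist_unif[where 'x='x]] by (simp flip: sum_distrib_right)

text \<open>Agrees with \<open>kl_div v u\<close> when \<open>u y > 0\<close> wherever \<open>v y > 0\<close>; a junk value otherwise.\<close>

definition kl_real :: "('y::finite \<Rightarrow> real) \<Rightarrow> ('y \<Rightarrow> real) \<Rightarrow> real" where
  "kl_real v u = (\<Sum>y\<in>UNIV. if v y = 0 then 0 else v y * ln (v y / u y))"

definition output_dist :: "('x::finite \<Rightarrow> real) \<Rightarrow> ('x \<Rightarrow> 'y::finite \<Rightarrow> real) \<Rightarrow> 'y \<Rightarrow> real" where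
  "output_dist Q V y = (\<Sum>x\<in>UNIV. Q x * V x y)"

lemma kl_real_self: "kl_real v v = 0"
  unfolding kl_real_def by (auto intro!: sum.neutral)

lemma mutual_info_eq_avg_kl_real:
  "mutual_info Q V = (\<Sum>x\<in>UNIV. Q x * kl_real (V x) (output_dist Q V))"
  unfolding mutual_info_def kl_real_def output_dist_def
  by (auto simp: sum_distrib_left intro!: sum.cong)

lemma pdist_output_dist:
  assumes Q: "pdist Q" and V: "channel V"
  shows "pdist (output_dist Q V)"
proof -
  have "(\<Sum>y\<in>UNIV. output_dist Q V y) = (\<Sum>x\<in>UNIV. Q x * (\<Sum>y\<in>UNIV. V x y))"
    unfolding output_dist_def by (subst sum.swap) (simp add: sum_distrib_left)
  also have "\<dots> = 1" using Q V by (simp add: channel_sum pdist_sum)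
  finally show ?thesis
    unfolding pdist_def output_dist_def
    using Q V by (auto intro!: sum_nonneg simp: pdist_nonneg channel_nonneg)
qed

lemma output_dist_pos_iff:
  assumes Q: "pdist Q" and V: "channel V"
  shows "0 < output_dist Q V y \<longleftrightarrow> (\<exists>x. 0 < Q x \<and> 0 < V x y)"
proof -
  have nonneg: "0 \<le> Q x * V x y" for x
    using Q V by (simp add: pdist_nonneg channel_nonneg)
  have "output_dist Q V y = 0 \<longleftrightarrow> (\<forall>x. Q x * V x y = 0)"
    unfolding output_dist_def using nonneg by (simp add: sum_nonneg_eq_0_iff)
  moreover have "0 \<le> output_dist Q V y"
    unfolding output_dist_def using nonneg by (simp add: sum_nonneg)
  ultimately show ?thesis
    using Q V by (auto simp: order_less_le pdist_nonneg channel_nonneg)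
qed

lemma cond_div_eq_kl_real:
  assumes "\<forall>x y. Q x > 0 \<longrightarrow> V x y \<noteq> 0 \<longrightarrow> W x y \<noteq> 0" and "pdist Q"
  shows "cond_div V W Q = ereal (\<Sum>x\<in>UNIV. Q x * kl_real (V x) (W x))"
proof -
  have "ereal (Q x) * kl_div (V x) (W x) = ereal (Q x * kl_real (V x) (W x))" for x
  proof (cases "Q x = 0")
    case True then show ?thesis by (simp flip: zero_ereal_def)
  next
    case False
    then have "Q x > 0" using pdist_nonneg[OF assms(2), of x] by simp
    then have "kl_div (V x) (W x)
        = (\<Sum>y\<in>UNIV. ereal (if V x y = 0 then 0 else V x y * ln (V x y / W x y)))"
      unfolding kl_div_def using assms(1) by (intro sum.cong) (auto simp: zero_ereal_def)
    then show ?thesis unfolding kl_real_def by (simp add: sum_ereal)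
  qed
  then show ?thesis unfolding cond_div_def by (simp add: sum_ereal)
qed

lemma cond_div_eq_infinity:
  assumes "Q x > 0" "V x y \<noteq> 0" "W x y = 0"
  shows "cond_div V W Q = \<infinity>"
proof -
  have "kl_div (V x) (W x) = \<infinity>"
    unfolding kl_div_def sum_Pinfty using assms by (auto intro!: bexI[of _ y])
  then show ?thesis
    unfolding cond_div_def sum_Pinfty using assms(1) by (auto intro!: bexI[of _ x])
qed

text \<open>Both directions of Gibbs' inequality come from the pointwise slack
  \<open>v ln (v S / u) + u / S - v = v (z - 1 - ln z) \<ge> 0\<close> with \<open>z = u / (v S)\<close>, which vanishes iff \<open>z = 1\<close>.\<close>

lemma gibbs_slack:
  fixes v u :: "'y::finite \<Rightarrow> real"
  assumes v0: "\<forall>y. v y \<ge> 0" and v1: "sum v UNIV = 1" and u0: "\<forall>y. u y \<ge> 0"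
    and vu: "\<forall>y. v y > 0 \<longrightarrow> u y > 0"
  defines "S \<equiv> sum u UNIV"
  defines "e \<equiv> \<lambda>y. if v y = 0 then u y / S else v y * ln (v y * S / u y) + u y / S - v y"
  shows "S > 0" and "\<forall>y. e y \<ge> 0" and "sum e UNIV = kl_real v u + ln S"
    and "e y = 0 \<Longrightarrow> v y = u y / S"
proof -
  obtain y0 where "v y0 > 0" using pdist_obtain_pos[of v] v0 v1 unfolding pdist_def by blast
  then have "u y0 > 0" using vu by blast
  moreover have "u y0 \<le> S" unfolding S_def by (rule member_le_sum) (use u0 in auto)
  ultimately show S: "S > 0" by linarith
  have slack: "e y = v y * (z - 1 - ln z)" and z_pos: "0 < z"
    if "v y > 0" and "z = u y / (v y * S)" for y z
  proof -
    have "u y > 0" using vu that(1) by blast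
    then show "0 < z" using that S by simp
    have "ln (v y * S / u y) = - ln z" using that S \<open>u y > 0\<close> by (simp add: ln_div)
    moreover have "u y / S = v y * z" using that S by simp
    ultimately show "e y = v y * (z - 1 - ln z)"
      using that(1) unfolding e_def by (simp add: algebra_simps)
  qed
  show "\<forall>y. e y \<ge> 0"
  proof
    fix y show "e y \<ge> 0"
    proof (cases "v y = 0")
      case True then show ?thesis unfolding e_def using u0 S by simp
    next
      case False
      define z where "z = u y / (v y * S)"
      have "v y > 0" using False v0 by (simp add: order_less_le)
      moreover have "0 \<le> z - 1 - ln z"
        using ln_le_minus_one[OF z_pos[OF \<open>v y > 0\<close> z_def]] by simp
      ultimately show ?thesis using slack[OF _ z_def] by simp
    qed
  qed
  have "e y = (if v y = 0 then 0 else v y * ln (v y / u y)) + v y * ln S + u y / S - v y" for y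
  proof (cases "v y = 0")
    case False
    then have "v y > 0" "u y > 0" using v0 vu by (auto simp: order_less_le)
    then have "ln (v y * S / u y) = ln (v y / u y) + ln S"
      using S by (simp add: ln_mult ln_div)
    then show ?thesis using False unfolding e_def by (simp add: distrib_left)
  qed (simp add: e_def)
  then have "sum e UNIV = kl_real v u + (\<Sum>y\<in>UNIV. v y) * ln S + (\<Sum>y\<in>UNIV. u y) / S - (\<Sum>y\<in>UNIV. v y)"
    unfolding kl_real_def by (simp add: sum.distrib sum_subtractf sum_distrib_right sum_divide_distrib)
  then show "sum e UNIV = kl_real v u + ln S" using v1 S unfolding S_def by simp
  assume "e y = 0"
  show "v y = u y / S"
  proof (cases "v y = 0")
    case True then show ?thesis using \<open>e y = 0\<close> S unfolding e_def by simp
  next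
    case False
    define z where "z = u y / (v y * S)"
    have "v y > 0" using False v0 by (simp add: order_less_le)
    then have "ln z = z - 1" using slack[OF _ z_def] \<open>e y = 0\<close> by simp
    then have "z = 1" using ln_eq_minus_one z_pos[OF \<open>v y > 0\<close> z_def] by blast
    then show ?thesis using \<open>v y > 0\<close> S unfolding z_def by (simp add: field_simps)
  qed
qed

lemma gibbs_inequality:
  fixes v u :: "'y::finite \<Rightarrow> real"
  assumes "\<forall>y. v y \<ge> 0" "sum v UNIV = 1" "\<forall>y. u y \<ge> 0" "\<forall>y. v y > 0 \<longrightarrow> u y > 0"
  shows "- ln (sum u UNIV) \<le> kl_real v u"
  using gibbs_slack(2,3)[OF assms] sum_nonneg[of UNIV] by (smt (verit, ccfv_SIG))

lemma gibbs_equality: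
  fixes v u :: "'y::finite \<Rightarrow> real"
  assumes "\<forall>y. v y \<ge> 0" "sum v UNIV = 1" "\<forall>y. u y \<ge> 0" "\<forall>y. v y > 0 \<longrightarrow> u y > 0"
    and "kl_real v u = - ln (sum u UNIV)"
  shows "v y = u y / sum u UNIV"
proof -
  note slack = gibbs_slack[OF assms(1-4)]
  let ?e = "\<lambda>y. if v y = 0 then u y / sum u UNIV
      else v y * ln (v y * sum u UNIV / u y) + u y / sum u UNIV - v y"
  have "sum ?e UNIV = 0" using slack(3) assms(5) by simp
  then have "?e y = 0" using sum_nonneg_eq_0_iff[of UNIV ?e] slack(2) by simp
  then show ?thesis by (rule slack(4))
qed

lemma kl_real_scaled:
  assumes "sum v UNIV = 1" and "0 < c"
  shows "kl_real v (\<lambda>y. c * v y) = - ln c"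
proof -
  have "kl_real v (\<lambda>y. c * v y) = (\<Sum>y\<in>UNIV. v y * - ln c)"
    unfolding kl_real_def using \<open>0 < c\<close> by (intro sum.cong) (auto simp: ln_div)
  then show ?thesis using assms(1) by (simp add: sum_negf flip: sum_distrib_right)
qed

lemma avg_kl_real_eq_mutual_info_plus_kl_real:
  assumes Q: "pdist Q" and V: "channel V"
    and r: "\<forall>y. 0 < output_dist Q V y \<longrightarrow> 0 < r y"
  shows "(\<Sum>x\<in>UNIV. Q x * kl_real (V x) r)
      = mutual_info Q V + kl_real (output_dist Q V) r"
proof -
  let ?p = "output_dist Q V"
  have pointwise: "Q x * ((if V x y = 0 then 0 else V x y * ln (V x y / r y))
        - (if V x y = 0 then 0 else V x y * ln (V x y / ?p y)))
      = Q x * V x y * (ln (?p y) - ln (r y))" for x y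
  proof (cases "Q x = 0 \<or> V x y = 0")
    case False
    then have "0 < Q x" "0 < V x y"
      using pdist_nonneg[OF Q, of x] channel_nonneg[OF V, of x y] by auto
    then have "0 < ?p y" "0 < r y" using output_dist_pos_iff[OF Q V] r by blast+
    then show ?thesis using \<open>0 < V x y\<close> by (simp add: ln_div algebra_simps)
  qed auto
  have "(\<Sum>x\<in>UNIV. Q x * kl_real (V x) r) - mutual_info Q V
      = (\<Sum>x\<in>UNIV. \<Sum>y\<in>UNIV. Q x * ((if V x y = 0 then 0 else V x y * ln (V x y / r y))
          - (if V x y = 0 then 0 else V x y * ln (V x y / ?p y))))"
    unfolding mutual_info_eq_avg_kl_real kl_real_def
    by (simp add: sum_subtractf right_diff_distrib sum_distrib_left)
  also have "\<dots> = (\<Sum>x\<in>UNIV. \<Sum>y\<in>UNIV. Q x * V x y * (ln (?p y) - ln (r y)))"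
    unfolding pointwise ..
  also have "\<dots> = (\<Sum>y\<in>UNIV. ?p y * (ln (?p y) - ln (r y)))"
    unfolding output_dist_def sum_distrib_right by (rule sum.swap)
  also have "\<dots> = kl_real ?p r"
    unfolding kl_real_def
    using pdist_nonneg[OF pdist_output_dist[OF Q V]] r
    by (intro sum.cong) (auto simp: ln_div order_less_le)
  finally show ?thesis by simp
qed

lemma mutual_info_le_of_constant_kl_real:
  assumes V: "channel V" and Q: "pdist Q"
    and c: "\<forall>x. kl_real (V x) (output_dist unif V) = c"
  shows "mutual_info Q V \<le> c" and "mutual_info unif V = c"
proof -
  let ?q = "output_dist unif V"
  have q: "pdist ?q" by (rule pdist_output_dist[OF pdist_unif V])
  have supp: "\<forall>y. 0 < output_dist Q V y \<longrightarrow> 0 < ?q y"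
    using output_dist_pos_iff[OF Q V] output_dist_pos_iff[OF pdist_unif V] unif_pos by blast
  have "c = mutual_info Q V + kl_real (output_dist Q V) ?q"
    using avg_kl_real_eq_mutual_info_plus_kl_real[OF Q V supp] c pdist_sum[OF Q]
    by (simp flip: sum_distrib_right)
  moreover have "- ln (sum ?q UNIV) \<le> kl_real (output_dist Q V) ?q"
    using pdist_output_dist[OF Q V] q supp by (intro gibbs_inequality) (auto simp: pdist_def)
  ultimately show "mutual_info Q V \<le> c" using pdist_sum[OF q] by simp
  show "mutual_info unif V = c"
    unfolding mutual_info_eq_avg_kl_real c[rule_format] by (rule sum_unif_mult_const)
qed

section \<open>Gallager's bound\<close>

lemma rpow_nonneg: "0 \<le> b \<Longrightarrow> 0 \<le> rpow b t"
  unfolding rpow_def by simp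

lemma rpow_pos: "0 < b \<Longrightarrow> 0 < rpow b t"
  unfolding rpow_def by simp

lemma rpow_eq_powr: "0 < b \<Longrightarrow> rpow b t = b powr t"
  unfolding rpow_def by simp

lemma mult_rpow_eq_powr: "0 \<le> a \<Longrightarrow> 0 \<le> \<rho> \<Longrightarrow> a * rpow a \<rho> = a powr (1 + \<rho>)"
  unfolding rpow_def by (auto simp: powr_mult_base)

lemma weighted_am_gm:
  fixes a b s :: real
  assumes "0 \<le> a" "0 \<le> b" "0 < s" "s \<le> 1"
  shows "a powr s * rpow b (1 - s) \<le> s * a + (1 - s) * b"
    and "s < 1 \<Longrightarrow> a powr s * rpow b (1 - s) = s * a + (1 - s) * b \<Longrightarrow> a = b"
proof -
  have main: "a powr s * b powr (1 - s) \<le> s * a + (1 - s) * b \<and>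
      (a powr s * b powr (1 - s) = s * a + (1 - s) * b \<longrightarrow> a = b)" if s1: "s < 1"
  proof (cases "a = 0 \<or> b = 0")
    case True
    then show ?thesis using assms s1 by auto
  next
    case False
    then have a: "a > 0" and b: "b > 0" using assms by auto
    define m where "m = s * a + (1 - s) * b"
    have m: "m > 0" unfolding m_def using a b assms s1 by (smt (verit) mult_pos_pos)
    have la: "ln (a / m) \<le> a / m - 1" and lb: "ln (b / m) \<le> b / m - 1"
      using ln_le_minus_one a b m by simp_all
    text \<open>Since \<open>s (a/m - 1) + (1 - s) (b/m - 1) = 0\<close>, the gap to \<open>ln m\<close> is a
      convex combination of the slacks of \<open>ln z \<le> z - 1\<close> at \<open>z = a/m\<close> and \<open>z = b/m\<close>.\<close>
    have "s * (a / m - 1) + (1 - s) * (b / m - 1) = 0"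
      unfolding m_def using m[unfolded m_def] by (simp add: field_simps)
    then have key: "s * ln a + (1 - s) * ln b - ln m
        = s * (ln (a / m) - (a / m - 1)) + (1 - s) * (ln (b / m) - (b / m - 1))"
      using a b m by (simp add: ln_div algebra_simps)
    have slack_a: "s * (ln (a / m) - (a / m - 1)) \<le> 0"
      using la assms by (simp add: mult_nonneg_nonpos)
    have slack_b: "(1 - s) * (ln (b / m) - (b / m - 1)) \<le> 0"
      using lb s1 by (simp add: mult_nonneg_nonpos)
    have geo: "a powr s * b powr (1 - s) = exp (s * ln a + (1 - s) * ln b)"
      using a b by (simp add: powr_def exp_add)
    have "a powr s * b powr (1 - s) \<le> m"
      using key slack_a slack_b m geo
      by (metis add_nonpos_nonpos diff_le_0_iff_le exp_le_cancel_iff exp_ln)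
    moreover have "a = b" if "a powr s * b powr (1 - s) = m"
    proof -
      have "s * ln a + (1 - s) * ln b = ln m" using that geo m by (metis ln_exp)
      then have "s * (ln (a / m) - (a / m - 1)) = 0" "(1 - s) * (ln (b / m) - (b / m - 1)) = 0"
        using key slack_a slack_b by linarith+
      then have "a / m = 1" "b / m = 1"
        using ln_eq_minus_one[of "a / m"] ln_eq_minus_one[of "b / m"] a b m assms s1 by auto
      then show "a = b" by (simp add: divide_eq_1_iff)
    qed
    ultimately show ?thesis unfolding m_def by blast
  qed
  show "a powr s * rpow b (1 - s) \<le> s * a + (1 - s) * b"
    using main assms by (cases "s = 1") (auto simp: rpow_def)
  show "a = b" if "s < 1" "a powr s * rpow b (1 - s) = s * a + (1 - s) * b"
    using main that by (simp add: rpow_def)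
qed

lemma jensen_ln:
  fixes Q a :: "'x::finite \<Rightarrow> real"
  assumes Q: "pdist Q" and a: "\<forall>x. Q x > 0 \<longrightarrow> a x > 0"
  shows "(\<Sum>x\<in>UNIV. Q x * ln (a x)) \<le> ln (\<Sum>x\<in>UNIV. Q x * a x)"
    and "(\<Sum>x\<in>UNIV. Q x * a x) > 0"
proof -
  obtain x0 where "Q x0 > 0" using pdist_obtain_pos[OF Q] .
  have nonneg: "Q x * a x \<ge> 0" for x
    using a pdist_nonneg[OF Q, of x] by (metis less_eq_real_def mult_eq_0_iff mult_nonneg_nonneg)
  have "Q x0 * a x0 \<le> (\<Sum>x\<in>UNIV. Q x * a x)"
    by (rule member_le_sum) (use nonneg in auto)
  moreover have "Q x0 * a x0 > 0" using \<open>Q x0 > 0\<close> a by simp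
  ultimately show A: "(\<Sum>x\<in>UNIV. Q x * a x) > 0" by linarith
  define A where "A = (\<Sum>x\<in>UNIV. Q x * a x)"
  have "A > 0" using A unfolding A_def .
  have "Q x * ln (a x) - Q x * ln A \<le> Q x * (a x / A) - Q x" for x
  proof (cases "Q x = 0")
    case False
    then have "Q x > 0" "a x > 0" using pdist_nonneg[OF Q, of x] a by auto
    then have "Q x * ln (a x / A) \<le> Q x * (a x / A - 1)"
      using ln_le_minus_one \<open>A > 0\<close> by (simp add: mult_left_mono)
    then show ?thesis using \<open>a x > 0\<close> \<open>A > 0\<close> by (simp add: ln_div algebra_simps)
  qed simp
  then have "(\<Sum>x\<in>UNIV. Q x * ln (a x)) - (\<Sum>x\<in>UNIV. Q x) * ln A
       \<le> (\<Sum>x\<in>UNIV. Q x * a x) / A - (\<Sum>x\<in>UNIV. Q x)"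
    using sum_mono[of UNIV "\<lambda>x. Q x * ln (a x) - Q x * ln A" "\<lambda>x. Q x * (a x / A) - Q x"]
    by (simp add: sum_subtractf sum_distrib_right sum_divide_distrib)
  then show "(\<Sum>x\<in>UNIV. Q x * ln (a x)) \<le> ln (\<Sum>x\<in>UNIV. Q x * a x)"
    using pdist_sum[OF Q] \<open>A > 0\<close> unfolding A_def by simp
qed

lemma holder_pdist:
  fixes \<alpha> p :: "'y::finite \<Rightarrow> real"
  assumes \<alpha>: "\<forall>y. 0 \<le> \<alpha> y" and p: "pdist p" and \<rho>: "0 \<le> \<rho>"
  defines "Z \<equiv> \<Sum>y\<in>UNIV. \<alpha> y powr (1 + \<rho>)"
  shows "(\<Sum>y\<in>UNIV. \<alpha> y * rpow (p y) (\<rho> / (1 + \<rho>))) \<le> Z powr (1 / (1 + \<rho>))"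
    and "0 < \<rho> \<Longrightarrow> 0 < Z \<Longrightarrow>
      (\<Sum>y\<in>UNIV. \<alpha> y * rpow (p y) (\<rho> / (1 + \<rho>))) = Z powr (1 / (1 + \<rho>)) \<Longrightarrow>
      p y = \<alpha> y powr (1 + \<rho>) / Z"
proof -
  define s where "s = 1 / (1 + \<rho>)"
  have s: "0 < s" "s \<le> 1" "\<rho> / (1 + \<rho>) = 1 - s" "(1 + \<rho>) * s = 1"
    unfolding s_def using \<rho> by (auto simp: field_simps)
  have Z0: "0 \<le> Z" unfolding Z_def by (simp add: sum_nonneg)
  define A where "A y = \<alpha> y powr (1 + \<rho>) / Z" for y
  define gap where "gap y = Z powr s * (s * A y + (1 - s) * p y) - \<alpha> y * rpow (p y) (1 - s)" for y
  have gap: "0 \<le> gap y" and sum_gap: "sum gap UNIV = Z powr s - (\<Sum>y\<in>UNIV. \<alpha> y * rpow (p y) (1 - s))"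
    and term_eq: "\<alpha> y * rpow (p y) (1 - s) = Z powr s * (A y powr s * rpow (p y) (1 - s))"
    if "0 < Z" for y
  proof -
    have "A y powr s = \<alpha> y / Z powr s"
      unfolding A_def using \<alpha> s(4) by (simp add: powr_divide powr_powr)
    then show term_eq: "\<alpha> y * rpow (p y) (1 - s) = Z powr s * (A y powr s * rpow (p y) (1 - s))"
      using \<open>0 < Z\<close> by simp
    show "0 \<le> gap y"
      unfolding gap_def term_eq using weighted_am_gm(1)[OF _ pdist_nonneg[OF p] s(1,2), of "A y"]
      using \<open>0 < Z\<close> by (simp add: A_def mult_left_mono)
    have "(\<Sum>y\<in>UNIV. A y) = 1"
      unfolding A_def Z_def using \<open>0 < Z\<close>[unfolded Z_def] by (simp flip: sum_divide_distrib)
    moreover have "(\<Sum>y\<in>UNIV. Z powr s * (s * A y + (1 - s) * p y))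
        = Z powr s * (s * (\<Sum>y\<in>UNIV. A y) + (1 - s) * (\<Sum>y\<in>UNIV. p y))"
      by (simp add: sum.distrib flip: sum_distrib_left)
    ultimately show "sum gap UNIV = Z powr s - (\<Sum>y\<in>UNIV. \<alpha> y * rpow (p y) (1 - s))"
      unfolding gap_def using pdist_sum[OF p] by (simp add: sum_subtractf)
  qed
  show "(\<Sum>y\<in>UNIV. \<alpha> y * rpow (p y) (\<rho> / (1 + \<rho>))) \<le> Z powr (1 / (1 + \<rho>))"
  proof (cases "Z = 0")
    case True
    then have "\<alpha> y = 0" for y
      using \<alpha> sum_nonneg_eq_0_iff[of UNIV "\<lambda>y. \<alpha> y powr (1 + \<rho>)"] unfolding Z_def by simp
    then show ?thesis by simp
  next
    case False
    then show ?thesis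
      using sum_gap sum_nonneg[of UNIV gap] gap Z0 s(3) unfolding s_def by force
  qed
  assume "0 < \<rho>" "0 < Z" and eq: "(\<Sum>y\<in>UNIV. \<alpha> y * rpow (p y) (\<rho> / (1 + \<rho>))) = Z powr (1 / (1 + \<rho>))"
  have "sum gap UNIV = 0" using sum_gap[OF \<open>0 < Z\<close>] eq s(3) unfolding s_def by simp
  then have "gap y = 0" using sum_nonneg_eq_0_iff[of UNIV gap] gap[OF \<open>0 < Z\<close>] by simp
  then have "A y powr s * rpow (p y) (1 - s) = s * A y + (1 - s) * p y"
    unfolding gap_def term_eq[OF \<open>0 < Z\<close>] using \<open>0 < Z\<close> by simp
  moreover have "s < 1" unfolding s_def using \<open>0 < \<rho>\<close> by simp
  ultimately have "A y = p y"
    using weighted_am_gm(2)[OF _ pdist_nonneg[OF p] s(1,2)] \<open>0 < Z\<close> by (simp add: A_def)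
  then show "p y = \<alpha> y powr (1 + \<rho>) / Z" unfolding A_def by simp
qed

definition gallager_alpha :: "('x::finite \<Rightarrow> 'y::finite \<Rightarrow> real) \<Rightarrow> real \<Rightarrow> ('x \<Rightarrow> real) \<Rightarrow> 'y \<Rightarrow> real" where
  "gallager_alpha W \<rho> Q y = (\<Sum>x\<in>UNIV. Q x * W x y powr (1 / (1 + \<rho>)))"

definition gallager_Z :: "('x::finite \<Rightarrow> 'y::finite \<Rightarrow> real) \<Rightarrow> real \<Rightarrow> ('x \<Rightarrow> real) \<Rightarrow> real" where
  "gallager_Z W \<rho> Q = (\<Sum>y\<in>UNIV. gallager_alpha W \<rho> Q y powr (1 + \<rho>))"

definition tilted_row :: "('x::finite \<Rightarrow> 'y::finite \<Rightarrow> real) \<Rightarrow> real \<Rightarrow> ('y \<Rightarrow> real) \<Rightarrow> 'x \<Rightarrow> 'y \<Rightarrow> real" where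
  "tilted_row W \<rho> p x y = W x y powr (1 / (1 + \<rho>)) * rpow (p y) (\<rho> / (1 + \<rho>))"

lemma E_o_eq_minus_ln_gallager_Z: "E_o W \<rho> Q = - ln (gallager_Z W \<rho> Q)"
  unfolding E_o_def gallager_Z_def gallager_alpha_def ..

lemma gallager_alpha_nonneg: "pdist Q \<Longrightarrow> 0 \<le> gallager_alpha W \<rho> Q y"
  unfolding gallager_alpha_def by (auto intro!: sum_nonneg simp: pdist_nonneg)

lemma tilted_row_nonneg: "pdist p \<Longrightarrow> 0 \<le> tilted_row W \<rho> p x y"
  unfolding tilted_row_def by (simp add: rpow_nonneg pdist_nonneg)

lemma sum_tilted_row_average:
  "(\<Sum>x\<in>UNIV. Q x * (\<Sum>y\<in>UNIV. tilted_row W \<rho> p x y))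
     = (\<Sum>y\<in>UNIV. gallager_alpha W \<rho> Q y * rpow (p y) (\<rho> / (1 + \<rho>)))"
  unfolding tilted_row_def gallager_alpha_def sum_distrib_left sum_distrib_right
  by (subst sum.swap) (simp add: mult.assoc)

lemma E_o_le_gallager_bound:
  fixes W :: "'x::finite \<Rightarrow> 'y::finite \<Rightarrow> real"
  assumes Q: "pdist Q" and p: "pdist p" and \<rho>: "0 \<le> \<rho>"
    and pos: "\<forall>x. Q x > 0 \<longrightarrow> 0 < (\<Sum>y\<in>UNIV. tilted_row W \<rho> p x y)"
  shows "E_o W \<rho> Q \<le> - (1 + \<rho>) * (\<Sum>x\<in>UNIV. Q x * ln (\<Sum>y\<in>UNIV. tilted_row W \<rho> p x y))"
    and "0 < \<rho> \<Longrightarrow>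
      E_o W \<rho> Q = - (1 + \<rho>) * (\<Sum>x\<in>UNIV. Q x * ln (\<Sum>y\<in>UNIV. tilted_row W \<rho> p x y)) \<Longrightarrow>
      p y = gallager_alpha W \<rho> Q y powr (1 + \<rho>) / gallager_Z W \<rho> Q"
proof -
  define a where "a x = (\<Sum>y\<in>UNIV. tilted_row W \<rho> p x y)" for x
  define Z where "Z = gallager_Z W \<rho> Q"
  note jensen = jensen_ln[OF Q pos[folded a_def]]
  note holder = holder_pdist[OF _ p \<rho>, of "gallager_alpha W \<rho> Q",
      folded gallager_Z_def sum_tilted_row_average, folded a_def Z_def]
  have holder_le: "(\<Sum>x\<in>UNIV. Q x * a x) \<le> Z powr (1 / (1 + \<rho>))"
    using holder(1) gallager_alpha_nonneg[OF Q] by blast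
  have "0 \<le> Z" unfolding Z_def gallager_Z_def by (simp add: sum_nonneg)
  moreover have "Z \<noteq> 0" using holder_le jensen(2) by auto
  ultimately have "0 < Z" by simp
  have ln_Z: "ln (Z powr (1 / (1 + \<rho>))) = 1 / (1 + \<rho>) * ln Z"
    using \<open>0 < Z\<close> by (simp add: ln_powr)
  have "ln (\<Sum>x\<in>UNIV. Q x * a x) \<le> ln (Z powr (1 / (1 + \<rho>)))"
    using holder_le jensen(2) by (rule ln_mono)
  then have "(\<Sum>x\<in>UNIV. Q x * ln (a x)) \<le> 1 / (1 + \<rho>) * ln Z"
    using jensen(1) ln_Z by linarith
  then have "(1 + \<rho>) * (\<Sum>x\<in>UNIV. Q x * ln (a x)) \<le> (1 + \<rho>) * (1 / (1 + \<rho>) * ln Z)"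
    using \<rho> by (intro mult_left_mono) auto
  then have "- ln Z \<le> - (1 + \<rho>) * (\<Sum>x\<in>UNIV. Q x * ln (a x))"
    using \<rho> by (simp only: mult_minus_left) simp
  then show "E_o W \<rho> Q \<le> - (1 + \<rho>) * (\<Sum>x\<in>UNIV. Q x * ln (a x))"
    unfolding E_o_eq_minus_ln_gallager_Z Z_def[symmetric] .
  assume "0 < \<rho>" and "E_o W \<rho> Q = - (1 + \<rho>) * (\<Sum>x\<in>UNIV. Q x * ln (a x))"
  then have "(1 + \<rho>) * (\<Sum>x\<in>UNIV. Q x * ln (a x)) = ln Z"
    unfolding E_o_eq_minus_ln_gallager_Z Z_def[symmetric] by (simp add: algebra_simps)
  then have "(\<Sum>x\<in>UNIV. Q x * ln (a x)) = 1 / (1 + \<rho>) * ln Z"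
    using \<rho> by (simp add: field_simps)
  then have "ln (Z powr (1 / (1 + \<rho>))) \<le> ln (\<Sum>x\<in>UNIV. Q x * a x)"
    using jensen(1) ln_Z by simp
  then have "Z powr (1 / (1 + \<rho>)) \<le> (\<Sum>x\<in>UNIV. Q x * a x)"
    using jensen(2) \<open>0 < Z\<close> by (subst (asm) ln_le_cancel_iff) simp_all
  then have "(\<Sum>x\<in>UNIV. Q x * a x) = Z powr (1 / (1 + \<rho>))" using holder_le by simp
  then show "p y = gallager_alpha W \<rho> Q y powr (1 + \<rho>) / gallager_Z W \<rho> Q"
    using holder(2)[OF _ \<open>0 < \<rho>\<close> \<open>0 < Z\<close>] gallager_alpha_nonneg[OF Q] unfolding Z_def by blast
qed

section \<open>Gallager's function bounds the exponents from below\<close>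

lemma tilted_row_pos: "0 < W x y \<Longrightarrow> 0 < p y \<Longrightarrow> 0 < tilted_row W \<rho> p x y"
  unfolding tilted_row_def by (simp add: rpow_pos)

lemma saddle_obj_eq_tilted_row:
  "saddle_obj W R \<rho> q =
     (if \<exists>x. (\<Sum>y\<in>UNIV. tilted_row W \<rho> q x y) = 0 then \<infinity>
      else ereal (- \<rho> * R - (1 + \<rho>) *
        (\<Sum>x\<in>UNIV. unif x * ln (\<Sum>y\<in>UNIV. tilted_row W \<rho> q x y))))"
  unfolding saddle_obj_def tilted_row_def ..

lemma kl_real_tilted_row:
  assumes \<rho>: "0 \<le> \<rho>" and v: "\<forall>y. 0 \<le> v y"
    and supp: "\<forall>y. v y \<noteq> 0 \<longrightarrow> 0 < W x y \<and> 0 < p y"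
  shows "kl_real v (W x) + \<rho> * kl_real v p = (1 + \<rho>) * kl_real v (tilted_row W \<rho> p x)"
proof -
  have pointwise: "(if v y = 0 then 0 else v y * ln (v y / W x y))
        + \<rho> * (if v y = 0 then 0 else v y * ln (v y / p y))
      = (1 + \<rho>) * (if v y = 0 then 0 else v y * ln (v y / tilted_row W \<rho> p x y))" for y
  proof (cases "v y = 0")
    case False
    then have pos: "0 < v y" "0 < W x y" "0 < p y" using v supp by (auto simp: order_less_le)
    then have t: "0 < tilted_row W \<rho> p x y" by (intro tilted_row_pos)
    have "ln (tilted_row W \<rho> p x y) = (ln (W x y) + \<rho> * ln (p y)) / (1 + \<rho>)"
      unfolding tilted_row_def using pos
      by (simp add: ln_mult rpow_eq_powr ln_powr add_divide_distrib)
    then have ln_t: "ln (W x y) + \<rho> * ln (p y) = (1 + \<rho>) * ln (tilted_row W \<rho> p x y)"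
      using \<rho> by simp
    have "v y * ln (v y / W x y) + \<rho> * (v y * ln (v y / p y))
        = v y * ((1 + \<rho>) * ln (v y) - (ln (W x y) + \<rho> * ln (p y)))"
      using pos by (simp add: ln_div algebra_simps)
    also have "\<dots> = (1 + \<rho>) * (v y * ln (v y / tilted_row W \<rho> p x y))"
      unfolding ln_t using pos t by (simp add: ln_div algebra_simps)
    finally show ?thesis using False by simp
  qed simp
  have "kl_real v (W x) + \<rho> * kl_real v p
      = (\<Sum>y\<in>UNIV. (if v y = 0 then 0 else v y * ln (v y / W x y))
          + \<rho> * (if v y = 0 then 0 else v y * ln (v y / p y)))"
    unfolding kl_real_def sum_distrib_left sum.distrib ..
  also have "\<dots> = (1 + \<rho>) * kl_real v (tilted_row W \<rho> p x)"
    unfolding pointwise kl_real_def sum_distrib_left ..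
  finally show ?thesis .
qed

lemma row_support_pos:
  assumes W: "channel W" and V: "channel V" and Q: "pdist Q"
    and supp: "\<forall>x y. Q x > 0 \<longrightarrow> V x y \<noteq> 0 \<longrightarrow> W x y \<noteq> 0"
    and "Q x > 0" and "V x y \<noteq> 0"
  shows "0 < W x y" and "0 < output_dist Q V y"
  using assms channel_nonneg[OF W, of x y] channel_nonneg[OF V, of x y] output_dist_pos_iff[OF Q V]
  by (metis order_less_le)+

lemma avg_kl_real_plus_rate_eq:
  fixes W V :: "'x::finite \<Rightarrow> 'y::finite \<Rightarrow> real"
  assumes W: "channel W" and V: "channel V" and Q: "pdist Q" and \<rho>: "0 \<le> \<rho>"
    and supp: "\<forall>x y. Q x > 0 \<longrightarrow> V x y \<noteq> 0 \<longrightarrow> W x y \<noteq> 0"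
  shows "(\<Sum>x\<in>UNIV. Q x * kl_real (V x) (W x)) + \<rho> * mutual_info Q V
    = (1 + \<rho>) * (\<Sum>x\<in>UNIV. Q x * kl_real (V x) (tilted_row W \<rho> (output_dist Q V) x))"
proof -
  let ?p = "output_dist Q V"
  have pointwise: "Q x * (kl_real (V x) (W x) + \<rho> * kl_real (V x) ?p)
      = (1 + \<rho>) * (Q x * kl_real (V x) (tilted_row W \<rho> ?p x))" for x
  proof (cases "Q x > 0")
    case True
    then show ?thesis
      using kl_real_tilted_row[of \<rho> "V x" W x ?p] \<rho> channel_nonneg[OF V]
        row_support_pos[OF W V Q supp True] by simp
  qed (use pdist_nonneg[OF Q, of x] in simp)
  have "(\<Sum>x\<in>UNIV. Q x * kl_real (V x) (W x)) + \<rho> * mutual_info Q V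
      = (\<Sum>x\<in>UNIV. Q x * (kl_real (V x) (W x) + \<rho> * kl_real (V x) ?p))"
    unfolding mutual_info_eq_avg_kl_real by (simp add: sum.distrib sum_distrib_left algebra_simps)
  also have "\<dots> = (1 + \<rho>) * (\<Sum>x\<in>UNIV. Q x * kl_real (V x) (tilted_row W \<rho> ?p x))"
    unfolding pointwise by (simp add: sum_distrib_left)
  finally show ?thesis .
qed

text \<open>The slack in the inequality splits into Gibbs gaps of the rows \<open>V x\<close> against the tilted rows
  and the gap in Gallager's bound; in the equality case both vanish.\<close>

lemma E_o_minus_rate_le_kl_real:
  fixes W V :: "'x::finite \<Rightarrow> 'y::finite \<Rightarrow> real"
  assumes W: "channel W" and V: "channel V" and Q: "pdist Q" and \<rho>: "0 \<le> \<rho>"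
    and supp: "\<forall>x y. Q x > 0 \<longrightarrow> V x y \<noteq> 0 \<longrightarrow> W x y \<noteq> 0"
  defines "p \<equiv> output_dist Q V"
  shows "E_o W \<rho> Q - \<rho> * mutual_info Q V \<le> (\<Sum>x\<in>UNIV. Q x * kl_real (V x) (W x))"
    and "0 < \<rho> \<Longrightarrow> E_o W \<rho> Q - \<rho> * mutual_info Q V = (\<Sum>x\<in>UNIV. Q x * kl_real (V x) (W x)) \<Longrightarrow>
      p y = gallager_alpha W \<rho> Q y powr (1 + \<rho>) / gallager_Z W \<rho> Q"
    and "0 < \<rho> \<Longrightarrow> E_o W \<rho> Q - \<rho> * mutual_info Q V = (\<Sum>x\<in>UNIV. Q x * kl_real (V x) (W x)) \<Longrightarrow>
      Q x > 0 \<Longrightarrow> V x y = tilted_row W \<rho> p x y / (\<Sum>y'\<in>UNIV. tilted_row W \<rho> p x y')"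
proof -
  have p: "pdist p" unfolding p_def using pdist_output_dist[OF Q V] .
  define a where "a x = (\<Sum>y\<in>UNIV. tilted_row W \<rho> p x y)" for x
  have gibbs_hyps: "\<forall>y. 0 \<le> V x y" "sum (V x) UNIV = 1" "\<forall>y. 0 \<le> tilted_row W \<rho> p x y"
    "\<forall>y. 0 < V x y \<longrightarrow> 0 < tilted_row W \<rho> p x y" if "Q x > 0" for x
    using channel_nonneg[OF V] channel_sum[OF V] tilted_row_nonneg[OF p]
      row_support_pos[OF W V Q supp that] unfolding p_def by (auto intro: tilted_row_pos)
  define gap where
    "gap x = Q x * ((1 + \<rho>) * (kl_real (V x) (tilted_row W \<rho> p x) + ln (a x)))" for x
  have gap: "0 \<le> gap x" for x
  proof (cases "Q x > 0")
    case True
    then show ?thesis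
      using gibbs_inequality[OF gibbs_hyps[OF True]] \<rho> unfolding gap_def a_def by simp
  qed (use pdist_nonneg[OF Q, of x] gap_def in simp)
  have "sum gap UNIV = (1 + \<rho>) * (\<Sum>x\<in>UNIV. Q x * kl_real (V x) (tilted_row W \<rho> p x))
      + (1 + \<rho>) * (\<Sum>x\<in>UNIV. Q x * ln (a x))"
    unfolding gap_def by (simp add: algebra_simps sum.distrib sum_distrib_left)
  then have split: "(\<Sum>x\<in>UNIV. Q x * kl_real (V x) (W x)) - (E_o W \<rho> Q - \<rho> * mutual_info Q V)
      = sum gap UNIV + (- (1 + \<rho>) * (\<Sum>x\<in>UNIV. Q x * ln (a x)) - E_o W \<rho> Q)"
    using avg_kl_real_plus_rate_eq[OF W V Q \<rho> supp, folded p_def] by (simp add: algebra_simps)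
  have a_pos: "\<forall>x. Q x > 0 \<longrightarrow> 0 < a x"
    using gibbs_slack(1)[OF gibbs_hyps] unfolding a_def by blast
  note gallager = E_o_le_gallager_bound[OF Q p \<rho> a_pos[unfolded a_def], folded a_def]
  show "E_o W \<rho> Q - \<rho> * mutual_info Q V \<le> (\<Sum>x\<in>UNIV. Q x * kl_real (V x) (W x))"
    using split gallager(1) sum_nonneg[of UNIV gap] gap by force
  assume "0 < \<rho>" and eq: "E_o W \<rho> Q - \<rho> * mutual_info Q V = (\<Sum>x\<in>UNIV. Q x * kl_real (V x) (W x))"
  then have "sum gap UNIV = 0" "E_o W \<rho> Q = - (1 + \<rho>) * (\<Sum>x\<in>UNIV. Q x * ln (a x))"
    using split gallager(1) sum_nonneg[of UNIV gap] gap by force+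
  then show "p y = gallager_alpha W \<rho> Q y powr (1 + \<rho>) / gallager_Z W \<rho> Q"
    using gallager(2)[OF \<open>0 < \<rho>\<close>] by blast
  assume "Q x > 0"
  have "gap x = 0" using \<open>sum gap UNIV = 0\<close> sum_nonneg_eq_0_iff[of UNIV gap] gap by simp
  then have "kl_real (V x) (tilted_row W \<rho> p x) = - ln (sum (tilted_row W \<rho> p x) UNIV)"
    unfolding gap_def a_def using \<open>Q x > 0\<close> \<rho> by simp
  then show "V x y = tilted_row W \<rho> p x y / (\<Sum>y'\<in>UNIV. tilted_row W \<rho> p x y')"
    using gibbs_equality[OF gibbs_hyps[OF \<open>Q x > 0\<close>]] by blast
qed

lemma E_o_minus_rate_le_cond_div:
  fixes W V :: "'x::finite \<Rightarrow> 'y::finite \<Rightarrow> real"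
  assumes W: "channel W" and V: "channel V" and Q: "pdist Q" and \<rho>: "0 \<le> \<rho>"
  shows "ereal (E_o W \<rho> Q - \<rho> * mutual_info Q V) \<le> cond_div V W Q"
proof (cases "\<forall>x y. Q x > 0 \<longrightarrow> V x y \<noteq> 0 \<longrightarrow> W x y \<noteq> 0")
  case True
  then show ?thesis
    unfolding cond_div_eq_kl_real[OF True Q] using E_o_minus_rate_le_kl_real(1)[OF W V Q \<rho> True] by simp
next
  case False
  then obtain x y where "Q x > 0" "V x y \<noteq> 0" "W x y = 0" by blast
  then show ?thesis using cond_div_eq_infinity[of Q x V y W] by simp
qed

lemma E_SP_tilde_Q_le_E_SP_Q:
  fixes W :: "'x::finite \<Rightarrow> 'y::finite \<Rightarrow> real"
  assumes W: "channel W" and Q: "pdist Q"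
  shows "E_SP_tilde_Q W R Q \<le> E_SP_Q W R Q"
  unfolding E_SP_tilde_Q_def E_SP_Q_def
proof (intro SUP_least INF_greatest)
  fix \<rho> :: real and V :: "'x \<Rightarrow> 'y \<Rightarrow> real"
  assume "\<rho> \<in> {0..}" and "V \<in> {V. channel V \<and> mutual_info Q V \<le> R}"
  then have \<rho>: "0 \<le> \<rho>" and V: "channel V" and rate: "mutual_info Q V \<le> R" by auto
  have "E_o W \<rho> Q - \<rho> * R \<le> E_o W \<rho> Q - \<rho> * mutual_info Q V"
    using rate \<rho> by (simp add: mult_left_mono)
  then have "ereal (E_o W \<rho> Q - \<rho> * R) \<le> ereal (E_o W \<rho> Q - \<rho> * mutual_info Q V)" by simp
  also have "\<dots> \<le> cond_div V W Q" by (rule E_o_minus_rate_le_cond_div[OF W V Q \<rho>])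
  finally show "ereal (E_o W \<rho> Q - \<rho> * R) \<le> cond_div V W Q" .
qed

lemma E_o_minus_rate_le_saddle_obj:
  fixes W :: "'x::finite \<Rightarrow> 'y::finite \<Rightarrow> real"
  assumes q: "pdist q" and \<rho>: "0 \<le> \<rho>"
  shows "ereal (E_o W \<rho> unif - \<rho> * R) \<le> saddle_obj W R \<rho> q"
    and "0 < \<rho> \<Longrightarrow> saddle_obj W R \<rho> q = ereal (E_o W \<rho> unif - \<rho> * R) \<Longrightarrow>
      q y = gallager_alpha W \<rho> unif y powr (1 + \<rho>) / gallager_Z W \<rho> unif"
proof -
  define a where "a x = (\<Sum>y\<in>UNIV. tilted_row W \<rho> q x y)" for x
  have "0 \<le> a x" for x unfolding a_def by (simp add: sum_nonneg tilted_row_nonneg[OF q])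
  then have a_pos: "\<forall>x. (unif :: 'x \<Rightarrow> real) x > 0 \<longrightarrow> a x > 0" if "\<not> (\<exists>x. a x = 0)"
    using that by (simp add: order_less_le)
  note gallager = E_o_le_gallager_bound[OF pdist_unif q \<rho> a_pos[unfolded a_def], folded a_def]
  show "ereal (E_o W \<rho> unif - \<rho> * R) \<le> saddle_obj W R \<rho> q"
  proof (cases "\<exists>x. a x = 0")
    case False
    then have "E_o W \<rho> unif - \<rho> * R \<le> - \<rho> * R - (1 + \<rho>) * (\<Sum>x\<in>UNIV. unif x * ln (a x))"
      using gallager(1)[OF False] by (simp only: mult_minus_left)
    then show ?thesis unfolding saddle_obj_eq_tilted_row a_def[symmetric] using False by simp
  qed (simp add: saddle_obj_eq_tilted_row a_def[symmetric])
  assume "0 < \<rho>" and eq: "saddle_obj W R \<rho> q = ereal (E_o W \<rho> unif - \<rho> * R)"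
  then have "\<not> (\<exists>x. a x = 0)"
    unfolding saddle_obj_eq_tilted_row a_def[symmetric] by (auto split: if_splits)
  moreover have "E_o W \<rho> unif = - (1 + \<rho>) * (\<Sum>x\<in>UNIV. unif x * ln (a x))"
    using eq calculation unfolding saddle_obj_eq_tilted_row a_def[symmetric]
    by (simp add: algebra_simps)
  ultimately show "q y = gallager_alpha W \<rho> unif y powr (1 + \<rho>) / gallager_Z W \<rho> unif"
    using gallager(2)[OF _ \<open>0 < \<rho>\<close>] by blast
qed

section \<open>The tilted channel\<close>

definition tilted_channel :: "('x::finite \<Rightarrow> 'y::finite \<Rightarrow> real) \<Rightarrow> real \<Rightarrow> 'x \<Rightarrow> 'y \<Rightarrow> real" where
  "tilted_channel W \<rho> x y =
     W x y powr (1 / (1 + \<rho>)) * rpow (gallager_alpha W \<rho> unif y) \<rho> / gallager_Z W \<rho> unif"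

definition tilted_output :: "('x::finite \<Rightarrow> 'y::finite \<Rightarrow> real) \<Rightarrow> real \<Rightarrow> 'y \<Rightarrow> real" where
  "tilted_output W \<rho> y = gallager_alpha W \<rho> unif y powr (1 + \<rho>) / gallager_Z W \<rho> unif"

definition tilted_rate :: "('x::finite \<Rightarrow> 'y::finite \<Rightarrow> real) \<Rightarrow> real \<Rightarrow> real" where
  "tilted_rate W \<rho> = mutual_info unif (tilted_channel W \<rho>)"

lemma gallager_alpha_unif_pos: "W x y \<noteq> 0 \<Longrightarrow> 0 < gallager_alpha W \<rho> unif y"
proof -
  assume "W x y \<noteq> 0"
  then have "0 < unif x * W x y powr (1 / (1 + \<rho>))" using unif_pos[of x] by simp
  also have "\<dots> \<le> gallager_alpha W \<rho> unif y"
    unfolding gallager_alpha_def by (rule member_le_sum) (auto simp: unif_pos less_imp_le)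
  finally show ?thesis .
qed

lemma gallager_Z_unif_pos:
  assumes "channel W"
  shows "0 < gallager_Z W \<rho> unif"
proof -
  obtain y where "0 < W undefined y" using channel_obtain_pos[OF assms] .
  then have "0 < gallager_alpha W \<rho> unif y powr (1 + \<rho>)"
    using gallager_alpha_unif_pos[of W undefined y \<rho>] by simp
  also have "\<dots> \<le> gallager_Z W \<rho> unif"
    unfolding gallager_Z_def by (rule member_le_sum) auto
  finally show ?thesis .
qed

lemma gallager_Z_unif_neq_0: "channel W \<Longrightarrow> gallager_Z W \<rho> unif \<noteq> 0"
  using gallager_Z_unif_pos by (metis less_irrefl)

lemma gallager_alpha_unif_0: "channel W \<Longrightarrow> gallager_alpha W 0 unif = output_dist unif W"
  unfolding gallager_alpha_def output_dist_def by (auto simp: channel_nonneg)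

lemma gallager_Z_unif_0:
  assumes "channel W"
  shows "gallager_Z W 0 unif = 1"
  using pdist_output_dist[OF pdist_unif assms] gallager_alpha_unif_0[OF assms]
  unfolding gallager_Z_def pdist_def by simp

lemma E_o_unif_0: "channel W \<Longrightarrow> E_o W 0 unif = 0"
  unfolding E_o_eq_minus_ln_gallager_Z by (simp add: gallager_Z_unif_0)

lemma tilted_channel_0: "channel W \<Longrightarrow> tilted_channel W 0 = W"
  unfolding tilted_channel_def by (auto simp: gallager_Z_unif_0 rpow_def channel_nonneg)

lemma tilted_rate_0: "channel W \<Longrightarrow> tilted_rate W 0 = mutual_info unif W"
  unfolding tilted_rate_def by (simp add: tilted_channel_0)

lemma tilted_channel_nonneg: "channel W \<Longrightarrow> 0 \<le> tilted_channel W \<rho> x y"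
  unfolding tilted_channel_def
  by (intro divide_nonneg_pos mult_nonneg_nonneg)
    (auto simp: rpow_nonneg gallager_alpha_nonneg[OF pdist_unif] gallager_Z_unif_pos)

lemma tilted_channel_eq_0_iff: "channel W \<Longrightarrow> tilted_channel W \<rho> x y = 0 \<longleftrightarrow> W x y = 0"
  unfolding tilted_channel_def
  using gallager_Z_unif_pos[of W \<rho>] rpow_pos[OF gallager_alpha_unif_pos, of W x y \<rho> \<rho>]
  by (cases "W x y = 0") auto

lemma tilted_output_pos:
  assumes "channel W" and "W x y \<noteq> 0"
  shows "0 < tilted_output W \<rho> y"
  unfolding tilted_output_def
  using gallager_alpha_unif_pos[of W x y \<rho>, OF assms(2)] gallager_Z_unif_pos[OF assms(1), of \<rho>] by simp

lemma pdist_tilted_output: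
  assumes "channel W"
  shows "pdist (tilted_output W \<rho>)"
  unfolding pdist_def tilted_output_def
  using gallager_Z_unif_pos[OF assms, of \<rho>]
  by (simp add: sum_divide_distrib[symmetric] gallager_Z_def[symmetric])

lemma output_dist_tilted_channel:
  assumes "0 \<le> \<rho>"
  shows "output_dist unif (tilted_channel W \<rho>) = tilted_output W \<rho>"
proof
  fix y
  have "output_dist unif (tilted_channel W \<rho>) y
      = gallager_alpha W \<rho> unif y * rpow (gallager_alpha W \<rho> unif y) \<rho> / gallager_Z W \<rho> unif"
    unfolding output_dist_def tilted_channel_def gallager_alpha_def sum_distrib_right sum_divide_distrib
    by (simp add: mult.assoc)
  then show "output_dist unif (tilted_channel W \<rho>) y = tilted_output W \<rho> y"
    unfolding tilted_output_def
    using mult_rpow_eq_powr[OF gallager_alpha_nonneg[OF pdist_unif, of W \<rho> y] assms] by simp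
qed

lemma tilted_row_tilted_output:
  assumes W: "channel W" and \<rho>: "0 \<le> \<rho>"
  shows "tilted_row W \<rho> (tilted_output W \<rho>) x y
    = gallager_Z W \<rho> unif powr (1 / (1 + \<rho>)) * tilted_channel W \<rho> x y"
proof -
  define Z where "Z = gallager_Z W \<rho> unif"
  define \<alpha> where "\<alpha> = gallager_alpha W \<rho> unif y"
  have "0 < Z" unfolding Z_def using gallager_Z_unif_pos[OF W] .
  have "0 \<le> \<alpha>" unfolding \<alpha>_def using gallager_alpha_nonneg[OF pdist_unif] .
  have "rpow (\<alpha> powr (1 + \<rho>) / Z) (\<rho> / (1 + \<rho>)) = rpow \<alpha> \<rho> / Z powr (\<rho> / (1 + \<rho>))"
    using \<rho> \<open>0 \<le> \<alpha>\<close> \<open>0 < Z\<close> by (auto simp: rpow_def powr_divide powr_powr)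
  moreover have "1 / (1 + \<rho>) = 1 - \<rho> / (1 + \<rho>)" using \<rho> by (simp add: field_simps)
  then have "Z powr (1 / (1 + \<rho>)) = Z / Z powr (\<rho> / (1 + \<rho>))"
    using \<open>0 < Z\<close> by (simp add: powr_diff)
  ultimately show ?thesis
    unfolding tilted_row_def tilted_output_def tilted_channel_def Z_def[symmetric] \<alpha>_def[symmetric]
    using \<open>0 < Z\<close> by simp
qed

lemma continuous_on_gallager_alpha_unif:
  assumes "channel W"
  shows "continuous_on {0..} (\<lambda>\<rho>. gallager_alpha W \<rho> unif y)"
  unfolding gallager_alpha_def
  by (intro continuous_intros continuous_on_powr') (auto simp: channel_nonneg[OF assms])

lemma continuous_on_gallager_Z_unif:
  assumes "channel W"
  shows "continuous_on {0..} (\<lambda>\<rho>. gallager_Z W \<rho> unif)"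
  unfolding gallager_Z_def
  by (intro continuous_intros continuous_on_powr' continuous_on_gallager_alpha_unif[OF assms])
    (auto simp: gallager_alpha_nonneg[OF pdist_unif])

lemma continuous_on_E_o_unif:
  assumes "channel W"
  shows "continuous_on {0..} (\<lambda>\<rho>. E_o W \<rho> unif)"
  unfolding E_o_eq_minus_ln_gallager_Z
  by (intro continuous_intros continuous_on_gallager_Z_unif[OF assms])
    (auto simp: gallager_Z_unif_pos[OF assms] gallager_Z_unif_neq_0[OF assms])

lemma continuous_on_tilted_output:
  assumes "channel W"
  shows "continuous_on {0..} (\<lambda>\<rho>. tilted_output W \<rho> y)"
  unfolding tilted_output_def
  by (intro continuous_intros continuous_on_powr' continuous_on_gallager_alpha_unif[OF assms]
      continuous_on_gallager_Z_unif[OF assms])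
    (auto simp: gallager_alpha_nonneg[OF pdist_unif] gallager_Z_unif_neq_0[OF assms])

lemma continuous_on_tilted_channel:
  assumes W: "channel W"
  shows "continuous_on {0..} (\<lambda>\<rho>. tilted_channel W \<rho> x y)"
proof (cases "W x y = 0")
  case True
  then have "tilted_channel W \<rho> x y = 0" for \<rho> using tilted_channel_eq_0_iff[OF W] by simp
  then show ?thesis by simp
next
  case False
  have \<alpha>: "0 < gallager_alpha W \<rho> unif y" for \<rho>
    using gallager_alpha_unif_pos[of W x y, OF False] .
  have "tilted_channel W \<rho> x y
      = W x y powr (1 / (1 + \<rho>)) * gallager_alpha W \<rho> unif y powr \<rho> / gallager_Z W \<rho> unif" for \<rho>
    unfolding tilted_channel_def using \<alpha> by (simp add: rpow_eq_powr)
  moreover have "continuous_on {0..} (\<lambda>\<rho>.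
      W x y powr (1 / (1 + \<rho>)) * gallager_alpha W \<rho> unif y powr \<rho> / gallager_Z W \<rho> unif)"
    by (intro continuous_intros continuous_on_powr' continuous_on_gallager_alpha_unif[OF W]
        continuous_on_gallager_Z_unif[OF W])
      (use False \<alpha> in \<open>auto simp: channel_nonneg[OF W] less_imp_le gallager_Z_unif_neq_0[OF W]
        order_less_imp_not_eq2\<close>)
  ultimately show ?thesis by simp
qed

locale sym_channel =
  fixes W :: "'x::finite \<Rightarrow> 'y::finite \<Rightarrow> real" and P :: "'y set set"
  assumes channel: "channel W" and partition: "symmetric_partition W P"
begin

lemma gallager_alpha_unif_constant_on_blocks: "constant_on_blocks P (gallager_alpha W \<rho> unif)"
proof -
  have "gallager_alpha W \<rho> unif = (\<lambda>y. \<Sum>x\<in>UNIV. (\<lambda>w. w powr (1 / (1 + \<rho>)) / real CARD('x)) (W x y))"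
    unfolding gallager_alpha_def unif_def by auto
  then show ?thesis using column_sum_constant_on_blocks[OF partition] by simp
qed

lemma row_sum_tilt_eq_gallager_Z:
  assumes \<rho>: "0 \<le> \<rho>"
  shows "(\<Sum>y\<in>UNIV. W x y powr (1 / (1 + \<rho>)) * rpow (gallager_alpha W \<rho> unif y) \<rho>)
    = gallager_Z W \<rho> unif"
proof -
  define f where "f x = (\<Sum>y\<in>UNIV. W x y powr (1 / (1 + \<rho>)) * rpow (gallager_alpha W \<rho> unif y) \<rho>)" for x
  have "f x' = f x" for x'
    unfolding f_def
    by (rule row_sum_independent_of_input[OF partition gallager_alpha_unif_constant_on_blocks])
  then have "(\<Sum>x'\<in>UNIV. unif x' * f x') = f x"
    using sum_unif_mult_const[of "f x"] by (metis (no_types, lifting) sum.cong)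
  then have "f x = (\<Sum>x'\<in>UNIV. unif x' * f x')" ..
  also have "\<dots> = (\<Sum>y\<in>UNIV. gallager_alpha W \<rho> unif y * rpow (gallager_alpha W \<rho> unif y) \<rho>)"
    unfolding f_def gallager_alpha_def sum_distrib_left sum_distrib_right
    by (subst sum.swap) (simp add: mult.assoc)
  also have "\<dots> = gallager_Z W \<rho> unif"
    unfolding gallager_Z_def
    using mult_rpow_eq_powr[OF gallager_alpha_nonneg[OF pdist_unif, of W \<rho>] \<rho>] by simp
  finally show ?thesis unfolding f_def .
qed

lemma channel_tilted_channel:
  assumes \<rho>: "0 \<le> \<rho>"
  shows "channel (tilted_channel W \<rho>)"
proof -
  have "(\<Sum>y\<in>UNIV. tilted_channel W \<rho> x y) = 1" for x
    unfolding tilted_channel_def sum_divide_distrib[symmetric] row_sum_tilt_eq_gallager_Z[OF \<rho>]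
    using gallager_Z_unif_pos[OF channel, of \<rho>] by simp
  then show ?thesis unfolding channel_def pdist_def using tilted_channel_nonneg[OF channel] by blast
qed

lemma sum_tilted_row_tilted_output:
  assumes "0 \<le> \<rho>"
  shows "(\<Sum>y\<in>UNIV. tilted_row W \<rho> (tilted_output W \<rho>) x y) = gallager_Z W \<rho> unif powr (1 / (1 + \<rho>))"
  unfolding tilted_row_tilted_output[OF channel assms] sum_distrib_left[symmetric]
    channel_sum[OF channel_tilted_channel[OF assms]] by simp

lemma kl_real_tilted_channel_output:
  assumes \<rho>: "0 \<le> \<rho>"
  shows "kl_real (tilted_channel W \<rho> x) (tilted_output W \<rho>) = tilted_rate W \<rho>"
proof -
  have "kl_real (tilted_channel W \<rho> x') (tilted_output W \<rho>)
      = kl_real (tilted_channel W \<rho> x) (tilted_output W \<rho>)" for x'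
    unfolding kl_real_def tilted_channel_def tilted_output_def
    by (rule row_sum_independent_of_input[OF partition gallager_alpha_unif_constant_on_blocks,
          where F = "\<lambda>w a. if w powr (1 / (1 + \<rho>)) * rpow a \<rho> / gallager_Z W \<rho> unif = 0 then 0
            else w powr (1 / (1 + \<rho>)) * rpow a \<rho> / gallager_Z W \<rho> unif *
              ln (w powr (1 / (1 + \<rho>)) * rpow a \<rho> / gallager_Z W \<rho> unif /
                (a powr (1 + \<rho>) / gallager_Z W \<rho> unif))"])
  then show ?thesis
    using mutual_info_le_of_constant_kl_real(2)[OF channel_tilted_channel[OF \<rho>] pdist_unif]
    unfolding tilted_rate_def output_dist_tilted_channel[OF \<rho>] by metis
qed

lemma mutual_info_tilted_channel_le:
  "0 \<le> \<rho> \<Longrightarrow> pdist Q \<Longrightarrow> mutual_info Q (tilted_channel W \<rho>) \<le> tilted_rate W \<rho>"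
  using mutual_info_le_of_constant_kl_real(1)[OF channel_tilted_channel]
    kl_real_tilted_channel_output output_dist_tilted_channel by metis

lemma kl_real_tilted_channel_W:
  assumes \<rho>: "0 \<le> \<rho>"
  shows "kl_real (tilted_channel W \<rho> x) (W x) = E_o W \<rho> unif - \<rho> * tilted_rate W \<rho>"
proof -
  define Z where "Z = gallager_Z W \<rho> unif"
  have "0 < Z" unfolding Z_def by (rule gallager_Z_unif_pos[OF channel])
  have supp: "\<forall>y. tilted_channel W \<rho> x y \<noteq> 0 \<longrightarrow> 0 < W x y \<and> 0 < tilted_output W \<rho> y"
    using tilted_channel_eq_0_iff[OF channel] channel_nonneg[OF channel] tilted_output_pos[OF channel]
    by (metis order_less_le)
  text \<open>The tilted row of \<open>W\<close> at the tilted output is proportional to the tilted channel.\<close>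
  have "kl_real (tilted_channel W \<rho> x) (tilted_row W \<rho> (tilted_output W \<rho>) x)
      = - ln (Z powr (1 / (1 + \<rho>)))"
    unfolding tilted_row_tilted_output[OF channel \<rho>, folded Z_def]
    using \<open>0 < Z\<close> by (intro kl_real_scaled channel_sum[OF channel_tilted_channel[OF \<rho>]]) simp
  then have "(1 + \<rho>) * kl_real (tilted_channel W \<rho> x) (tilted_row W \<rho> (tilted_output W \<rho>) x)
      = (1 + \<rho>) * - ln (Z powr (1 / (1 + \<rho>)))" by simp
  also have "\<dots> = E_o W \<rho> unif"
    unfolding E_o_eq_minus_ln_gallager_Z Z_def[symmetric] using \<rho> \<open>0 < Z\<close> by (simp add: ln_powr)
  finally show ?thesis
    using kl_real_tilted_row[of \<rho> "tilted_channel W \<rho> x" W x "tilted_output W \<rho>", OF \<rho> _ supp]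
      tilted_channel_nonneg[OF channel]
      kl_real_tilted_channel_output[OF \<rho>] by simp
qed

lemma cond_div_tilted_channel:
  assumes \<rho>: "0 \<le> \<rho>" and Q: "pdist Q"
  shows "cond_div (tilted_channel W \<rho>) W Q = ereal (E_o W \<rho> unif - \<rho> * tilted_rate W \<rho>)"
proof -
  have supp: "\<forall>x y. Q x > 0 \<longrightarrow> tilted_channel W \<rho> x y \<noteq> 0 \<longrightarrow> W x y \<noteq> 0"
    using tilted_channel_eq_0_iff[OF channel] by blast
  show ?thesis
    unfolding cond_div_eq_kl_real[OF supp Q] kl_real_tilted_channel_W[OF \<rho>]
    using pdist_sum[OF Q] by (simp flip: sum_distrib_right)
qed

lemma E_o_supporting_line:
  assumes \<rho>: "0 \<le> \<rho>" and \<rho>': "0 \<le> \<rho>'"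
  shows "E_o W \<rho>' unif \<le> E_o W \<rho> unif + (\<rho>' - \<rho>) * tilted_rate W \<rho>"
proof -
  have "\<forall>x y. unif x > (0::real) \<longrightarrow> tilted_channel W \<rho> x y \<noteq> 0 \<longrightarrow> W x y \<noteq> 0"
    using tilted_channel_eq_0_iff[OF channel] by blast
  from E_o_minus_rate_le_kl_real(1)[OF channel channel_tilted_channel[OF \<rho>] pdist_unif \<rho>' this]
  have "E_o W \<rho>' unif - \<rho>' * tilted_rate W \<rho> \<le> E_o W \<rho> unif - \<rho> * tilted_rate W \<rho>"
    unfolding kl_real_tilted_channel_W[OF \<rho>] sum_unif_mult_const tilted_rate_def .
  then show ?thesis by (simp add: algebra_simps)
qed

lemma tilted_rate_antimono:
  assumes "0 \<le> \<rho>1" "\<rho>1 \<le> \<rho>2"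
  shows "tilted_rate W \<rho>2 \<le> tilted_rate W \<rho>1"
proof -
  have "E_o W \<rho>2 unif \<le> E_o W \<rho>1 unif + (\<rho>2 - \<rho>1) * tilted_rate W \<rho>1"
    and "E_o W \<rho>1 unif \<le> E_o W \<rho>2 unif + (\<rho>1 - \<rho>2) * tilted_rate W \<rho>2"
    using E_o_supporting_line assms by auto
  then have "0 \<le> (\<rho>2 - \<rho>1) * (tilted_rate W \<rho>1 - tilted_rate W \<rho>2)"
    by (simp add: algebra_simps)
  then show ?thesis using assms by (cases "\<rho>1 = \<rho>2") (auto simp: zero_le_mult_iff)
qed

lemma capacity_eq_tilted_rate_0: "capacity W = tilted_rate W 0"
proof -
  have "mutual_info Q W \<le> mutual_info unif W" if "pdist Q" for Q
    using mutual_info_tilted_channel_le[OF order_refl that]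
    by (simp add: tilted_channel_0[OF channel] tilted_rate_0[OF channel])
  then have "capacity W = mutual_info unif W"
    unfolding capacity_def using pdist_unif by (intro cSup_eq_maximum) auto
  then show ?thesis by (simp add: tilted_rate_0[OF channel])
qed

lemma continuous_on_tilted_rate: "continuous_on {0..} (tilted_rate W)"
proof -
  let ?V = "\<lambda>\<rho>. tilted_channel W \<rho> undefined"
  have "continuous_on {0..} (\<lambda>\<rho>. \<Sum>y\<in>UNIV. if ?V \<rho> y = 0 then 0
      else ?V \<rho> y * ln (?V \<rho> y / tilted_output W \<rho> y))"
  proof (intro continuous_on_sum)
    fix y
    show "continuous_on {0..} (\<lambda>\<rho>. if ?V \<rho> y = 0 then 0
        else ?V \<rho> y * ln (?V \<rho> y / tilted_output W \<rho> y))"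
    proof (cases "W undefined y = 0")
      case True
      then have "?V \<rho> y = 0" for \<rho> using tilted_channel_eq_0_iff[OF channel] by simp
      then show ?thesis by simp
    next
      case False
      then have "0 < ?V \<rho> y" "0 < tilted_output W \<rho> y" for \<rho>
        using tilted_channel_eq_0_iff[OF channel] tilted_channel_nonneg[OF channel]
          tilted_output_pos[OF channel] by (auto simp: order_less_le)
      then show ?thesis
        by (auto intro!: continuous_intros continuous_on_tilted_channel[OF channel]
            continuous_on_tilted_output[OF channel] simp: order_less_imp_not_eq2)
    qed
  qed
  then show ?thesis
    by (rule continuous_on_eq)
      (use kl_real_tilted_channel_output in \<open>auto simp: kl_real_def\<close>)
qed

end

section \<open>The optimal slope\<close>

definition optimal_rho :: "('x::finite \<Rightarrow> 'y::finite \<Rightarrow> real) \<Rightarrow> real \<Rightarrow> real \<Rightarrow> bool" where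
  "optimal_rho W r \<rho> \<longleftrightarrow> 0 \<le> \<rho> \<and> (\<forall>\<rho>'\<ge>0. E_o W \<rho>' unif - \<rho>' * r \<le> E_o W \<rho> unif - \<rho> * r)"

lemma E_o_minus_rate_le_E_SP_Q:
  assumes "channel W" and "pdist Q" and "0 \<le> \<rho>"
  shows "ereal (E_o W \<rho> Q - \<rho> * r) \<le> E_SP_Q W r Q"
proof -
  have "ereal (E_o W \<rho> Q - \<rho> * r) \<le> E_SP_tilde_Q W r Q"
    unfolding E_SP_tilde_Q_def by (rule SUP_upper) (use assms(3) in simp)
  also have "\<dots> \<le> E_SP_Q W r Q" by (rule E_SP_tilde_Q_le_E_SP_Q[OF assms(1,2)])
  finally show ?thesis .
qed

lemma E_SP_Q_le_E_SP: "pdist Q \<Longrightarrow> E_SP_Q W r Q \<le> E_SP W r"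
  unfolding E_SP_def by (rule SUP_upper) simp

lemma E_SP_tilde_Q_unif_eq:
  assumes "optimal_rho W r \<rho>"
  shows "E_SP_tilde_Q W r unif = ereal (E_o W \<rho> unif - \<rho> * r)"
  unfolding E_SP_tilde_Q_def
  using assms unfolding optimal_rho_def by (intro antisym SUP_least SUP_upper) auto

context sym_channel
begin

lemma E_SP_nonpos_above_capacity:
  assumes "capacity W \<le> R"
  shows "E_SP W R \<le> 0"
  unfolding E_SP_def
proof (rule SUP_least)
  fix Q :: "'x \<Rightarrow> real" assume "Q \<in> {Q. pdist Q}"
  then have Q: "pdist Q" by simp
  have "mutual_info Q W \<le> R"
    using mutual_info_tilted_channel_le[OF order_refl Q] assms
    by (simp add: tilted_channel_0[OF channel] capacity_eq_tilted_rate_0)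
  then have "E_SP_Q W R Q \<le> cond_div W W Q"
    unfolding E_SP_Q_def using channel by (intro INF_lower) simp
  also have "\<dots> = 0"
    using cond_div_eq_kl_real[of Q W W] Q by (simp add: kl_real_self zero_ereal_def)
  finally show "E_SP_Q W R Q \<le> 0" .
qed

lemma E_SP_finite_above_R_inf:
  assumes "R_inf W < r"
  shows "E_SP W r \<noteq> \<infinity>"
proof
  assume "E_SP W r = \<infinity>"
  moreover have "bdd_above {R. E_SP W R = \<infinity>}"
  proof (rule bdd_aboveI)
    fix R assume "R \<in> {R. E_SP W R = \<infinity>}"
    then show "R \<le> capacity W"
      using E_SP_nonpos_above_capacity[of R] by (cases "capacity W \<le> R") auto
  qed
  ultimately have "r \<le> R_inf W" unfolding R_inf_def by (intro cSup_upper) auto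
  then show False using assms by simp
qed

lemma E_o_minus_rate_bounded:
  assumes "R_inf W < r"
  obtains M where "\<And>\<rho>. 0 \<le> \<rho> \<Longrightarrow> E_o W \<rho> unif - \<rho> * r \<le> M"
proof -
  have le: "ereal (E_o W \<rho> unif - \<rho> * r) \<le> E_SP W r" if "0 \<le> \<rho>" for \<rho>
    using E_o_minus_rate_le_E_SP_Q[OF channel pdist_unif that] E_SP_Q_le_E_SP[OF pdist_unif]
    by (rule order_trans)
  have "E_SP W r \<noteq> \<infinity>" "E_SP W r \<noteq> - \<infinity>"
    using E_SP_finite_above_R_inf[OF assms] le[of 0] by auto
  then show ?thesis
    using le that[of "real_of_ereal (E_SP W r)"] by (cases "E_SP W r") auto
qed

text \<open>Bounded above at a smaller rate \<open>r'\<close>, \<open>E_o(\<rho>) - \<rho> r\<close> falls below its value \<open>0\<close>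
  at \<open>\<rho> = 0\<close> for large \<open>\<rho>\<close>, so its maximum over a compact interval is global.\<close>

lemma exists_optimal_rho:
  assumes "R_inf W < r"
  obtains \<rho> where "optimal_rho W r \<rho>"
proof -
  define r' where "r' = (R_inf W + r) / 2"
  have "R_inf W < r'" "r' < r" unfolding r'_def using assms by auto
  obtain M where M: "\<And>\<rho>. 0 \<le> \<rho> \<Longrightarrow> E_o W \<rho> unif - \<rho> * r' \<le> M"
    using E_o_minus_rate_bounded[OF \<open>R_inf W < r'\<close>] by blast
  define K where "K = max 0 (M / (r - r'))"
  have "0 \<le> K" and "M / (r - r') \<le> K" unfolding K_def by simp_all
  then have KM: "M \<le> K * (r - r')" using \<open>r' < r\<close> by (simp add: pos_divide_le_eq)
  have cont: "continuous_on {0..K} (\<lambda>\<rho>. E_o W \<rho> unif - \<rho> * r)"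
    by (intro continuous_intros continuous_on_subset[OF continuous_on_E_o_unif[OF channel]]) auto
  obtain \<rho> where \<rho>: "\<rho> \<in> {0..K}"
    and max: "\<forall>\<rho>'\<in>{0..K}. E_o W \<rho>' unif - \<rho>' * r \<le> E_o W \<rho> unif - \<rho> * r"
    using continuous_attains_sup[OF compact_Icc _ cont] \<open>0 \<le> K\<close> by auto
  have "0 \<le> E_o W \<rho> unif - \<rho> * r"
    using max[rule_format, of 0] \<open>0 \<le> K\<close> E_o_unif_0[OF channel] by simp
  have "E_o W \<rho>' unif - \<rho>' * r \<le> E_o W \<rho> unif - \<rho> * r" if "0 \<le> \<rho>'" for \<rho>'
  proof (cases "\<rho>' \<le> K")
    case False
    have "E_o W \<rho>' unif - \<rho>' * r = (E_o W \<rho>' unif - \<rho>' * r') - \<rho>' * (r - r')"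
      by (simp add: algebra_simps)
    also have "\<dots> < M - K * (r - r')"
      using M[OF that] mult_strict_right_mono[of K \<rho>' "r - r'"] False \<open>r' < r\<close> by linarith
    finally show ?thesis using KM \<open>0 \<le> E_o W \<rho> unif - \<rho> * r\<close> by simp
  qed (use max that in simp)
  then show ?thesis using that \<rho> unfolding optimal_rho_def by auto
qed

lemma optimal_rho_if_tilted_rate_eq:
  assumes "0 \<le> \<rho>" and "tilted_rate W \<rho> = r"
  shows "optimal_rho W r \<rho>"
  unfolding optimal_rho_def
  using assms E_o_supporting_line[OF assms(1)] by (auto simp: algebra_simps)

lemma tilted_rate_right_of_optimal:
  assumes "optimal_rho W r \<rho>" and "\<rho> < \<rho>'"
  shows "tilted_rate W \<rho>' \<le> r"
proof -
  have "0 \<le> \<rho>" "0 \<le> \<rho>'" using assms unfolding optimal_rho_def by auto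
  then have "E_o W \<rho> unif \<le> E_o W \<rho>' unif + (\<rho> - \<rho>') * tilted_rate W \<rho>'"
    and "E_o W \<rho>' unif - \<rho>' * r \<le> E_o W \<rho> unif - \<rho> * r"
    using E_o_supporting_line assms(1) unfolding optimal_rho_def by auto
  then have "0 \<le> (\<rho>' - \<rho>) * (r - tilted_rate W \<rho>')" by (simp add: algebra_simps)
  then show ?thesis using assms(2) by (simp add: zero_le_mult_iff)
qed

lemma tilted_rate_left_of_optimal:
  assumes "optimal_rho W r \<rho>" and "0 \<le> \<rho>'" and "\<rho>' < \<rho>"
  shows "r \<le> tilted_rate W \<rho>'"
proof -
  have "0 \<le> \<rho>" using assms unfolding optimal_rho_def by auto
  then have "E_o W \<rho> unif \<le> E_o W \<rho>' unif + (\<rho> - \<rho>') * tilted_rate W \<rho>'"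
    and "E_o W \<rho>' unif - \<rho>' * r \<le> E_o W \<rho> unif - \<rho> * r"
    using E_o_supporting_line assms unfolding optimal_rho_def by auto
  then have "0 \<le> (\<rho> - \<rho>') * (tilted_rate W \<rho>' - r)" by (simp add: algebra_simps)
  then show ?thesis using assms(3) by (simp add: zero_le_mult_iff)
qed

lemma tilted_rate_optimal_rho:
  assumes opt: "optimal_rho W r \<rho>" and r: "r < capacity W"
  shows "0 < \<rho>" and "tilted_rate W \<rho> = r"
proof -
  have "0 \<le> \<rho>" using opt unfolding optimal_rho_def by simp
  have "(tilted_rate W \<longlongrightarrow> tilted_rate W \<rho>) (at \<rho> within {0..})"
    using continuous_on_tilted_rate \<open>0 \<le> \<rho>\<close> unfolding continuous_on_def by blast
  then have "(tilted_rate W \<longlongrightarrow> tilted_rate W \<rho>) (at_right \<rho>)"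
    by (rule tendsto_within_subset) (use \<open>0 \<le> \<rho>\<close> in auto)
  moreover have "\<forall>\<^sub>F \<rho>' in at_right \<rho>. tilted_rate W \<rho>' \<le> r"
    using tilted_rate_right_of_optimal[OF opt] by (intro eventually_at_rightI[of _ "\<rho> + 1"]) auto
  ultimately have le: "tilted_rate W \<rho> \<le> r" by (intro tendsto_upperbound) auto
  then show "0 < \<rho>"
    using r \<open>0 \<le> \<rho>\<close> capacity_eq_tilted_rate_0 by (cases "\<rho> = 0") auto
  then have "isCont (tilted_rate W) \<rho>"
    using continuous_on_interior[OF continuous_on_tilted_rate] by simp
  then have "(tilted_rate W \<longlongrightarrow> tilted_rate W \<rho>) (at_left \<rho>)"
    unfolding isCont_def by (rule filterlim_at_split[THEN iffD1, THEN conjunct1])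
  moreover have "\<forall>\<^sub>F \<rho>' in at_left \<rho>. r \<le> tilted_rate W \<rho>'"
    using tilted_rate_left_of_optimal[OF opt] \<open>0 < \<rho>\<close> by (intro eventually_at_leftI[of 0]) auto
  ultimately have "r \<le> tilted_rate W \<rho>" by (intro tendsto_lowerbound) auto
  then show "tilted_rate W \<rho> = r" using le by simp
qed

lemma E_SP_Q_unif_eq:
  assumes opt: "optimal_rho W r \<rho>" and r: "r < capacity W"
  shows "E_SP_Q W r unif = ereal (E_o W \<rho> unif - \<rho> * r)"
proof (rule antisym)
  have "0 \<le> \<rho>" using opt unfolding optimal_rho_def by simp
  have rate: "tilted_rate W \<rho> = r" by (rule tilted_rate_optimal_rho(2)[OF opt r])
  have "E_SP_Q W r unif \<le> cond_div (tilted_channel W \<rho>) W unif"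
    unfolding E_SP_Q_def using channel_tilted_channel[OF \<open>0 \<le> \<rho>\<close>] rate
    by (intro INF_lower) (simp add: tilted_rate_def)
  also have "\<dots> = ereal (E_o W \<rho> unif - \<rho> * r)"
    using cond_div_tilted_channel[OF \<open>0 \<le> \<rho>\<close> pdist_unif] rate by simp
  finally show "E_SP_Q W r unif \<le> ereal (E_o W \<rho> unif - \<rho> * r)" .
  show "ereal (E_o W \<rho> unif - \<rho> * r) \<le> E_SP_Q W r unif"
    by (rule E_o_minus_rate_le_E_SP_Q[OF channel pdist_unif \<open>0 \<le> \<rho>\<close>])
qed

lemma E_SP_eq_E_o:
  assumes opt: "optimal_rho W r \<rho>" and rate: "tilted_rate W \<rho> = r"
  shows "E_SP W r = ereal (E_o W \<rho> unif - \<rho> * r)"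
proof (rule antisym)
  have "0 \<le> \<rho>" using opt unfolding optimal_rho_def by simp
  show "E_SP W r \<le> ereal (E_o W \<rho> unif - \<rho> * r)"
    unfolding E_SP_def
  proof (rule SUP_least)
    fix Q :: "'x \<Rightarrow> real" assume "Q \<in> {Q. pdist Q}"
    then have Q: "pdist Q" by simp
    have "E_SP_Q W r Q \<le> cond_div (tilted_channel W \<rho>) W Q"
      unfolding E_SP_Q_def
      using channel_tilted_channel[OF \<open>0 \<le> \<rho>\<close>] mutual_info_tilted_channel_le[OF \<open>0 \<le> \<rho>\<close> Q] rate
      by (intro INF_lower) simp
    also have "\<dots> = ereal (E_o W \<rho> unif - \<rho> * r)"
      unfolding cond_div_tilted_channel[OF \<open>0 \<le> \<rho>\<close> Q] rate ..
    finally show "E_SP_Q W r Q \<le> ereal (E_o W \<rho> unif - \<rho> * r)" .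
  qed
  show "ereal (E_o W \<rho> unif - \<rho> * r) \<le> E_SP W r"
    using E_o_minus_rate_le_E_SP_Q[OF channel pdist_unif \<open>0 \<le> \<rho>\<close>] E_SP_Q_le_E_SP[OF pdist_unif]
    by (rule order_trans)
qed

lemma E_SP_tilde_eq_E_o:
  assumes opt: "optimal_rho W r \<rho>" and rate: "tilted_rate W \<rho> = r"
  shows "E_SP_tilde W r = ereal (E_o W \<rho> unif - \<rho> * r)"
proof (rule antisym)
  show "E_SP_tilde W r \<le> ereal (E_o W \<rho> unif - \<rho> * r)"
    unfolding E_SP_tilde_def E_SP_eq_E_o[OF assms, symmetric]
    using E_SP_tilde_Q_le_E_SP_Q[OF channel] E_SP_Q_le_E_SP by (blast intro: SUP_least order_trans)
  show "ereal (E_o W \<rho> unif - \<rho> * r) \<le> E_SP_tilde W r"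
    unfolding E_SP_tilde_def E_SP_tilde_Q_unif_eq[OF opt, symmetric]
    using pdist_unif by (intro SUP_upper) simp
qed

end

section \<open>Uniqueness of the optimal slope\<close>

lemma ln_tilted_channel:
  assumes "channel W" and "W x y \<noteq> 0"
  shows "ln (tilted_channel W \<rho> x y) = 1 / (1 + \<rho>) * ln (W x y)
    + \<rho> * ln (gallager_alpha W \<rho> unif y) - ln (gallager_Z W \<rho> unif)"
proof -
  have "0 < W x y" using assms channel_nonneg[OF assms(1), of x y] by simp
  moreover have "0 < gallager_alpha W \<rho> unif y" by (rule gallager_alpha_unif_pos[of W x y, OF assms(2)])
  ultimately show ?thesis
    unfolding tilted_channel_def using gallager_Z_unif_pos[OF assms(1), of \<rho>]
    by (simp add: ln_div ln_mult rpow_eq_powr ln_powr)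
qed

lemma ln_tilted_output:
  assumes "channel W" and "W x y \<noteq> 0"
  shows "ln (tilted_output W \<rho> y) = (1 + \<rho>) * ln (gallager_alpha W \<rho> unif y) - ln (gallager_Z W \<rho> unif)"
  unfolding tilted_output_def
  using gallager_alpha_unif_pos[of W x y \<rho>, OF assms(2)] gallager_Z_unif_pos[OF assms(1), of \<rho>]
  by (simp add: ln_div ln_powr)

text \<open>Taking logarithms, \<open>V\<^sub>a = V\<^sub>b\<close> and \<open>q\<^sub>a = q\<^sub>b\<close> give two linear equations in
  \<open>ln W(y|x)\<close>, \<open>ln q(y)\<close> whose solution is \<open>ln W(y|x) - ln q(y) = const\<close>.\<close>

lemma proportional_if_tilts_coincide:
  assumes W: "channel W" and "0 \<le> a" "a < b"
    and q: "tilted_output W a = tilted_output W b" and V: "tilted_channel W a = tilted_channel W b"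
  obtains K where "0 < K" and "\<And>x y. W x y \<noteq> 0 \<Longrightarrow> W x y = K * tilted_output W a y"
proof -
  define sa where "sa = 1 / (1 + a)"
  define sb where "sb = 1 / (1 + b)"
  have sa: "sa * (1 + a) = 1" and sb: "sb * (1 + b) = 1"
    unfolding sa_def sb_def using assms(2,3) by auto
  have "sa - sb = (b - a) / ((1 + a) * (1 + b))"
    unfolding sa_def sb_def using assms(2,3) by (simp add: field_simps)
  then have "sa - sb \<noteq> 0" using assms(2,3) by simp
  define c where "c = (sa * ln (gallager_Z W a unif) - sb * ln (gallager_Z W b unif)) / (sa - sb)"
  have "W x y = exp c * tilted_output W a y" if "W x y \<noteq> 0" for x y
  proof -
    have "0 < W x y" using that channel_nonneg[OF W, of x y] by simp
    have "0 < tilted_output W a y" by (rule tilted_output_pos[OF W that])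
    have "(sa - sb) * (ln (W x y) - ln (tilted_output W a y))
        = sa * ln (gallager_Z W a unif) - sb * ln (gallager_Z W b unif)"
      using ln_tilted_channel[OF W that, of a] ln_tilted_channel[OF W that, of b]
        ln_tilted_output[OF W that, of a] ln_tilted_output[OF W that, of b] sa sb
      unfolding sa_def[symmetric] sb_def[symmetric] q V by algebra
    then have "ln (W x y) = ln (exp c * tilted_output W a y)"
      unfolding c_def using \<open>sa - sb \<noteq> 0\<close> \<open>0 < tilted_output W a y\<close> by (simp add: ln_mult field_simps)
    then show ?thesis using \<open>0 < W x y\<close> \<open>0 < tilted_output W a y\<close> by simp
  qed
  then show ?thesis using that[of "exp c"] by simp
qed

lemma gallager_alpha_unif_constant_column:
  fixes W :: "'x::finite \<Rightarrow> 'y::finite \<Rightarrow> real"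
  assumes "\<And>x. W x y \<noteq> 0 \<Longrightarrow> W x y = c"
  shows "gallager_alpha W \<rho> unif y = real (card {x. W x y \<noteq> 0}) / real CARD('x) * c powr (1 / (1 + \<rho>))"
proof -
  have "unif x * W x y powr (1 / (1 + \<rho>))
      = (if W x y \<noteq> 0 then 1 / real CARD('x) * c powr (1 / (1 + \<rho>)) else 0)" for x
    using assms[of x] unfolding unif_def by (cases "W x y = 0") auto
  then have "gallager_alpha W \<rho> unif y
      = (\<Sum>x\<in>UNIV. if W x y \<noteq> 0 then 1 / real CARD('x) * c powr (1 / (1 + \<rho>)) else 0)"
    unfolding gallager_alpha_def by simp
  also have "\<dots> = (\<Sum>x\<in>{x. W x y \<noteq> 0}. 1 / real CARD('x) * c powr (1 / (1 + \<rho>)))"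
    by (simp add: sum.If_cases)
  finally show ?thesis by simp
qed

lemma E_o_linear_if_proportional:
  assumes W: "channel W" and a: "0 \<le> a" and "0 < K"
    and proportional: "\<And>x y. W x y \<noteq> 0 \<Longrightarrow> W x y = K * tilted_output W a y"
  obtains L where "\<And>\<rho>. 0 \<le> \<rho> \<Longrightarrow> E_o W \<rho> unif = \<rho> * L"
proof -
  define q where "q = tilted_output W a"
  define n where "n = real CARD('a)"
  define frac where "frac y = real (card {z. W z y \<noteq> 0}) / n" for y
  have "0 < n" unfolding n_def by simp
  have \<alpha>: "gallager_alpha W \<rho> unif y = frac y * (K * q y) powr (1 / (1 + \<rho>))" for \<rho> y
    unfolding frac_def n_def q_def by (rule gallager_alpha_unif_constant_column) (rule proportional)
  define \<kappa> where "\<kappa> = (gallager_Z W a unif / K) powr (1 / (1 + a))"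
  have "0 < \<kappa>" unfolding \<kappa>_def using gallager_Z_unif_pos[OF W, of a] \<open>0 < K\<close> by simp
  have frac: "frac y = \<kappa>" if "W z y \<noteq> 0" for z y
  proof -
    have "0 < q y" unfolding q_def by (rule tilted_output_pos[OF W that])
    have "0 < card {z. W z y \<noteq> 0}" using that by (auto simp: card_gt_0_iff)
    then have "0 < frac y" unfolding frac_def using \<open>0 < n\<close> by simp
    have "gallager_alpha W a unif y powr (1 + a) = frac y powr (1 + a) * (K * q y)"
      unfolding \<alpha>[of a y] using \<open>0 < K\<close> \<open>0 < q y\<close> \<open>0 < frac y\<close> a
      by (simp add: powr_mult powr_powr)
    moreover have "gallager_alpha W a unif y powr (1 + a) = q y * gallager_Z W a unif"
      unfolding q_def tilted_output_def using gallager_Z_unif_pos[OF W, of a] by simp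
    ultimately have "q y * gallager_Z W a unif = q y * (frac y powr (1 + a) * K)"
      by (simp add: mult_ac)
    then have frac_pow: "frac y powr (1 + a) = gallager_Z W a unif / K"
      using \<open>0 < q y\<close> \<open>0 < K\<close> by (simp add: field_simps)
    show ?thesis
      unfolding \<kappa>_def frac_pow[symmetric] using \<open>0 < frac y\<close> a by (simp add: powr_powr)
  qed
  have Z: "gallager_Z W \<rho> unif = \<kappa> powr (1 + \<rho>) * K" if "0 \<le> \<rho>" for \<rho>
  proof -
    have "gallager_alpha W \<rho> unif y powr (1 + \<rho>) = \<kappa> powr (1 + \<rho>) * K * q y" for y
    proof (cases "\<exists>z. W z y \<noteq> 0")
      case True
      then obtain z where "W z y \<noteq> 0" by blast
      then show ?thesis
        unfolding \<alpha> frac[OF \<open>W z y \<noteq> 0\<close>]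
        using that \<open>0 < K\<close> \<open>0 < \<kappa>\<close> tilted_output_pos[OF W \<open>W z y \<noteq> 0\<close>, of a]
        by (simp add: q_def powr_mult powr_powr)
    next
      case False
      then have "gallager_alpha W \<rho>' unif y = 0" for \<rho>' unfolding gallager_alpha_def by simp
      then show ?thesis by (simp add: q_def tilted_output_def)
    qed
    then show ?thesis
      unfolding gallager_Z_def using pdist_sum[OF pdist_tilted_output[OF W]]
      by (simp add: q_def flip: sum_distrib_left)
  qed
  have "\<kappa> * K = 1" using Z[of 0] gallager_Z_unif_0[OF W] \<open>0 < \<kappa>\<close> by simp
  then have "\<kappa> powr (1 + \<rho>) * K = \<kappa> powr \<rho>" for \<rho>
    using \<open>0 < \<kappa>\<close> by (simp add: powr_add mult_ac)
  then have "E_o W \<rho> unif = \<rho> * - ln \<kappa>" if "0 \<le> \<rho>" for \<rho>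
    unfolding E_o_eq_minus_ln_gallager_Z Z[OF that] using \<open>0 < \<kappa>\<close> by (simp add: ln_powr)
  then show ?thesis using that by blast
qed

context sym_channel
begin

lemma tilts_coincide_if_optimal:
  assumes opt1: "optimal_rho W r \<rho>1" and opt2: "optimal_rho W r \<rho>2" and "\<rho>1 < \<rho>2"
    and rate: "tilted_rate W \<rho>1 = r"
  shows "tilted_output W \<rho>1 = tilted_output W \<rho>2" and "tilted_channel W \<rho>1 = tilted_channel W \<rho>2"
proof -
  have "0 \<le> \<rho>1" "0 < \<rho>2" using opt1 \<open>\<rho>1 < \<rho>2\<close> unfolding optimal_rho_def by auto
  have "E_o W \<rho>2 unif - \<rho>2 * r \<le> E_o W \<rho>1 unif - \<rho>1 * r"
    and "E_o W \<rho>1 unif - \<rho>1 * r \<le> E_o W \<rho>2 unif - \<rho>2 * r"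
    using opt1 opt2 \<open>0 \<le> \<rho>1\<close> \<open>0 < \<rho>2\<close> unfolding optimal_rho_def by auto
  then have "E_o W \<rho>2 unif - \<rho>2 * r = E_o W \<rho>1 unif - \<rho>1 * r" by simp
  then have eq: "E_o W \<rho>2 unif - \<rho>2 * mutual_info unif (tilted_channel W \<rho>1)
      = (\<Sum>x\<in>UNIV. unif x * kl_real (tilted_channel W \<rho>1 x) (W x))"
    unfolding kl_real_tilted_channel_W[OF \<open>0 \<le> \<rho>1\<close>] sum_unif_mult_const
    using rate by (simp add: tilted_rate_def)
  have supp: "\<forall>x y. unif x > (0::real) \<longrightarrow> tilted_channel W \<rho>1 x y \<noteq> 0 \<longrightarrow> W x y \<noteq> 0"
    using tilted_channel_eq_0_iff[OF channel] by blast
  note equality = E_o_minus_rate_le_kl_real(2,3)[OF channel channel_tilted_channel[OF \<open>0 \<le> \<rho>1\<close>]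
      pdist_unif less_imp_le[OF \<open>0 < \<rho>2\<close>] supp \<open>0 < \<rho>2\<close> eq,
      unfolded output_dist_tilted_channel[OF \<open>0 \<le> \<rho>1\<close>]]
  show q: "tilted_output W \<rho>1 = tilted_output W \<rho>2"
    using equality(1) unfolding tilted_output_def[of W \<rho>2] by blast
  have "0 < gallager_Z W \<rho>2 unif powr (1 / (1 + \<rho>2))"
    using gallager_Z_unif_pos[OF channel, of \<rho>2] by simp
  then show "tilted_channel W \<rho>1 = tilted_channel W \<rho>2"
    using equality(2)[OF unif_pos]
    unfolding q sum_tilted_row_tilted_output[OF less_imp_le[OF \<open>0 < \<rho>2\<close>]]
    unfolding tilted_row_tilted_output[OF channel less_imp_le[OF \<open>0 < \<rho>2\<close>]]
    by auto
qed

lemma E_o_not_linear_above_R_inf: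
  assumes "R_inf W < L" and linear: "\<And>\<rho>. 0 \<le> \<rho> \<Longrightarrow> E_o W \<rho> unif = \<rho> * L"
  shows False
proof -
  define r where "r = (R_inf W + L) / 2"
  have "R_inf W < r" "r < L" unfolding r_def using assms(1) by auto
  obtain M where M: "\<And>\<rho>. 0 \<le> \<rho> \<Longrightarrow> E_o W \<rho> unif - \<rho> * r \<le> M"
    using E_o_minus_rate_bounded[OF \<open>R_inf W < r\<close>] by blast
  define \<rho> where "\<rho> = (\<bar>M\<bar> + 1) / (L - r)"
  have "0 \<le> \<rho>" unfolding \<rho>_def using \<open>r < L\<close> by simp
  have "E_o W \<rho> unif - \<rho> * r = \<rho> * (L - r)" using linear[OF \<open>0 \<le> \<rho>\<close>] by (simp add: algebra_simps)
  also have "\<dots> = \<bar>M\<bar> + 1" unfolding \<rho>_def using \<open>r < L\<close> by simp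
  finally show False using M[OF \<open>0 \<le> \<rho>\<close>] by simp
qed

text \<open>Two optimal slopes \<open>a < b\<close> force the tilts at their midpoint and at \<open>b\<close> to coincide,
  which makes \<open>E_o(\<cdot>, U)\<close> linear with slope \<open>r\<close>; above \<open>R\<^sub>\<infinity>\<close> this is impossible.\<close>

lemma optimal_rho_unique:
  assumes "R_inf W < r" and "optimal_rho W r a" and "optimal_rho W r b"
  shows "a = b"
proof -
  have False if opt_a: "optimal_rho W r a" and opt_b: "optimal_rho W r b" and "a < b" for a b
  proof -
    define m where "m = (a + b) / 2"
    have "0 \<le> a" using opt_a unfolding optimal_rho_def by simp
    then have "0 \<le> m" "a < m" "m < b" unfolding m_def using \<open>a < b\<close> by auto
    have rate: "tilted_rate W m = r"
      using tilted_rate_right_of_optimal[OF opt_a \<open>a < m\<close>]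
        tilted_rate_left_of_optimal[OF opt_b \<open>0 \<le> m\<close> \<open>m < b\<close>] by simp
    note tilts = tilts_coincide_if_optimal[OF optimal_rho_if_tilted_rate_eq[OF \<open>0 \<le> m\<close> rate]
        opt_b \<open>m < b\<close> rate]
    obtain K where "0 < K" "\<And>x y. W x y \<noteq> 0 \<Longrightarrow> W x y = K * tilted_output W m y"
      using proportional_if_tilts_coincide[OF channel \<open>0 \<le> m\<close> \<open>m < b\<close> tilts] by blast
    then obtain L where L: "\<And>\<rho>. 0 \<le> \<rho> \<Longrightarrow> E_o W \<rho> unif = \<rho> * L"
      using E_o_linear_if_proportional[OF channel \<open>0 \<le> m\<close>] by blast
    have "E_o W b unif - b * r \<le> E_o W a unif - a * r" "E_o W a unif - a * r \<le> E_o W b unif - b * r"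
      using opt_a opt_b \<open>0 \<le> a\<close> \<open>a < b\<close> unfolding optimal_rho_def by auto
    then have "a * L - a * r = b * L - b * r" using L \<open>0 \<le> a\<close> \<open>a < b\<close> by simp
    then have "(b - a) * (L - r) = 0" by (simp add: algebra_simps)
    then have "L = r" using \<open>a < b\<close> by simp
    then show False using E_o_not_linear_above_R_inf[OF _ L] assms(1) by simp
  qed
  then show ?thesis using assms(2,3) by (metis linorder_neqE)
qed

end

definition rho_opt :: "('x::finite \<Rightarrow> 'y::finite \<Rightarrow> real) \<Rightarrow> real \<Rightarrow> real" where
  "rho_opt W r = (SOME \<rho>. optimal_rho W r \<rho>)"

context sym_channel
begin

lemma optimal_rho_rho_opt: "R_inf W < r \<Longrightarrow> optimal_rho W r (rho_opt W r)"
  unfolding rho_opt_def using exists_optimal_rho by (metis someI)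

lemma optimal_rho_iff_eq_rho_opt: "R_inf W < r \<Longrightarrow> optimal_rho W r \<rho> \<longleftrightarrow> \<rho> = rho_opt W r"
  using optimal_rho_unique optimal_rho_rho_opt by blast

end

section \<open>The derivative of the sphere-packing exponent\<close>

context sym_channel
begin

lemma tilted_rate_less_right_of_optimal:
  assumes "R_inf W < r" and opt: "optimal_rho W r p" and "p < \<rho>"
  shows "tilted_rate W \<rho> < r"
proof -
  have "tilted_rate W \<rho> \<le> r" by (rule tilted_rate_right_of_optimal[OF opt \<open>p < \<rho>\<close>])
  moreover have "tilted_rate W \<rho> \<noteq> r"
  proof
    assume "tilted_rate W \<rho> = r"
    then have "optimal_rho W r \<rho>"
      using opt \<open>p < \<rho>\<close> by (intro optimal_rho_if_tilted_rate_eq) (auto simp: optimal_rho_def)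
    then show False using optimal_rho_unique[OF assms(1) _ opt] \<open>p < \<rho>\<close> by blast
  qed
  ultimately show ?thesis by simp
qed

lemma tilted_rate_greater_left_of_optimal:
  assumes "R_inf W < r" and opt: "optimal_rho W r p" and "0 \<le> \<rho>" and "\<rho> < p"
  shows "r < tilted_rate W \<rho>"
proof -
  have "r \<le> tilted_rate W \<rho>" by (rule tilted_rate_left_of_optimal[OF opt \<open>0 \<le> \<rho>\<close> \<open>\<rho> < p\<close>])
  moreover have "tilted_rate W \<rho> \<noteq> r"
  proof
    assume "tilted_rate W \<rho> = r"
    then have "optimal_rho W r \<rho>" by (rule optimal_rho_if_tilted_rate_eq[OF \<open>0 \<le> \<rho>\<close>])
    then show False using optimal_rho_unique[OF assms(1) _ opt] \<open>\<rho> < p\<close> by blast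
  qed
  ultimately show ?thesis by simp
qed

lemma rho_opt_less_if_tilted_rate_less:
  assumes "R_inf W < r" "r < capacity W" and "0 \<le> \<rho>" and "tilted_rate W \<rho> < r"
  shows "rho_opt W r < \<rho>"
proof (rule ccontr)
  assume "\<not> rho_opt W r < \<rho>"
  then have "tilted_rate W (rho_opt W r) \<le> tilted_rate W \<rho>"
    using \<open>0 \<le> \<rho>\<close> by (intro tilted_rate_antimono) auto
  then show False
    using tilted_rate_optimal_rho(2)[OF optimal_rho_rho_opt[OF assms(1)] assms(2)] assms(4) by simp
qed

lemma rho_opt_greater_if_tilted_rate_greater:
  assumes "R_inf W < r" "r < capacity W" and "r < tilted_rate W \<rho>"
  shows "\<rho> < rho_opt W r"
proof (rule ccontr)
  assume "\<not> \<rho> < rho_opt W r"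
  then have "tilted_rate W \<rho> \<le> tilted_rate W (rho_opt W r)"
    using optimal_rho_rho_opt[OF assms(1)] by (intro tilted_rate_antimono) (auto simp: optimal_rho_def)
  then show False
    using tilted_rate_optimal_rho(2)[OF optimal_rho_rho_opt[OF assms(1)] assms(2)] assms(3) by simp
qed

lemma isCont_rho_opt:
  assumes "R_inf W < R" and "R < capacity W"
  shows "isCont (rho_opt W) R"
  unfolding continuous_at_eps_delta
proof (intro allI impI)
  fix \<epsilon> :: real assume "0 < \<epsilon>"
  define p where "p = rho_opt W R"
  have opt: "optimal_rho W R p" unfolding p_def by (rule optimal_rho_rho_opt[OF assms(1)])
  have "0 < p" by (rule tilted_rate_optimal_rho(1)[OF opt assms(2)])
  define e where "e = min \<epsilon> p / 2"
  have "0 < e" "e < p" "e < \<epsilon>" unfolding e_def using \<open>0 < \<epsilon>\<close> \<open>0 < p\<close> by auto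
  have upper: "tilted_rate W (p + e) < R"
    using tilted_rate_less_right_of_optimal[OF assms(1) opt] \<open>0 < e\<close> by simp
  have lower: "R < tilted_rate W (p - e)"
    using tilted_rate_greater_left_of_optimal[OF assms(1) opt] \<open>0 < e\<close> \<open>e < p\<close> by simp
  define d where "d = min (min (R - tilted_rate W (p + e)) (tilted_rate W (p - e) - R))
      (min (R - R_inf W) (capacity W - R))"
  have "0 < d" unfolding d_def using upper lower assms by simp
  moreover have "dist (rho_opt W r) p < \<epsilon>" if "dist r R < d" for r
  proof -
    have r: "R_inf W < r" "r < capacity W" "tilted_rate W (p + e) < r" "r < tilted_rate W (p - e)"
      using that unfolding d_def dist_real_def by (auto simp: abs_less_iff)
    have "rho_opt W r < p + e"
      using rho_opt_less_if_tilted_rate_less[OF r(1,2) _ r(3)] \<open>0 < p\<close> \<open>0 < e\<close> by simp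
    moreover have "p - e < rho_opt W r" by (rule rho_opt_greater_if_tilted_rate_greater[OF r(1,2,4)])
    ultimately show ?thesis using \<open>e < \<epsilon>\<close> unfolding dist_real_def by (simp add: abs_less_iff)
  qed
  ultimately show "\<exists>d>0. \<forall>r. dist r R < d \<longrightarrow> dist (rho_opt W r) (rho_opt W R) < \<epsilon>"
    unfolding p_def by blast
qed

lemma E_SP_Q_unif_has_derivative:
  assumes R: "R_inf W < R" "R < capacity W"
  shows "((\<lambda>r. real_of_ereal (E_SP_Q W r unif)) has_field_derivative - rho_opt W R) (at R)"
proof -
  define h where "h r = real_of_ereal (E_SP_Q W r unif)" for r
  define p where "p = rho_opt W R"
  define I where "I = {R_inf W<..<capacity W}"
  have h: "h r = E_o W (rho_opt W r) unif - rho_opt W r * r" if "r \<in> I" for r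
    using E_SP_Q_unif_eq[OF optimal_rho_rho_opt] that unfolding h_def I_def by simp
  text \<open>Envelope argument: each \<open>h r\<close> is a maximum over \<open>\<rho>\<close> of functions affine in \<open>r\<close>.\<close>
  have envelope: "\<bar>(h r - h R) / (r - R) + p\<bar> \<le> \<bar>rho_opt W r - p\<bar>" if "r \<in> I" "r \<noteq> R" for r
  proof -
    have "R \<in> I" unfolding I_def using R by simp
    have "E_o W p unif - p * r \<le> h r" "E_o W (rho_opt W r) unif - rho_opt W r * R \<le> h R"
      using optimal_rho_rho_opt[of r] optimal_rho_rho_opt[OF R(1)] that(1) \<open>R \<in> I\<close>
      unfolding h[OF that(1)] h[OF \<open>R \<in> I\<close>] p_def optimal_rho_def I_def by auto
    then have "0 \<le> h r - h R + p * (r - R)" "h r - h R + p * (r - R) \<le> (p - rho_opt W r) * (r - R)"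
      unfolding h[OF \<open>R \<in> I\<close>] h[OF that(1)] p_def by (simp_all add: algebra_simps)
    moreover have "(p - rho_opt W r) * (r - R) \<le> \<bar>rho_opt W r - p\<bar> * \<bar>r - R\<bar>"
      by (metis abs_ge_self abs_minus_commute abs_mult)
    ultimately have "\<bar>h r - h R + p * (r - R)\<bar> \<le> \<bar>rho_opt W r - p\<bar> * \<bar>r - R\<bar>" by simp
    moreover have "(h r - h R) / (r - R) + p = (h r - h R + p * (r - R)) / (r - R)"
      using that(2) by (simp add: field_simps)
    ultimately show ?thesis using that(2) by (simp add: abs_divide divide_le_eq)
  qed
  have "((\<lambda>r. rho_opt W r - p) \<longlongrightarrow> 0) (at R)"
    using isCont_rho_opt[OF R] unfolding p_def isCont_def by (simp add: LIM_zero)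
  moreover have "\<forall>\<^sub>F r in at R. r \<in> I - {R}"
    unfolding I_def using R by (intro eventually_at_in_open) auto
  then have "\<forall>\<^sub>F r in at R. norm ((h r - h R) / (r - R) + p) \<le> norm (rho_opt W r - p) * 1"
    by eventually_elim (use envelope in auto)
  ultimately have "((\<lambda>r. (h r - h R) / (r - R) + p) \<longlongrightarrow> 0) (at R)" by (rule tendsto_0_le)
  then have "((\<lambda>r. (h r - h R) / (r - R)) \<longlongrightarrow> - p) (at R)"
    using tendsto_diff[OF _ tendsto_const[of p]] by fastforce
  then show ?thesis unfolding has_field_derivative_iff h_def p_def .
qed

lemma rho_R_eq_rho_opt: "R_inf W < R \<Longrightarrow> R < capacity W \<Longrightarrow> rho_R W R = rho_opt W R"
  unfolding rho_R_def using DERIV_imp_deriv[OF E_SP_Q_unif_has_derivative] by simp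

end

section \<open>The saddle point\<close>

lemma q_R_eq_tilted_output: "q_R W R = tilted_output W (rho_R W R)"
  unfolding q_R_def tilted_output_def gallager_Z_def gallager_alpha_def ..

context sym_channel
begin

lemma saddle_obj_tilted_output:
  assumes \<rho>: "0 \<le> \<rho>"
  shows "saddle_obj W R \<rho> (tilted_output W \<rho>) = ereal (E_o W \<rho> unif - \<rho> * R)"
proof -
  define Z where "Z = gallager_Z W \<rho> unif"
  have "0 < Z" unfolding Z_def by (rule gallager_Z_unif_pos[OF channel])
  have "(1 + \<rho>) * (\<Sum>x\<in>UNIV. unif x * ln (Z powr (1 / (1 + \<rho>)))) = ln Z"
    unfolding sum_unif_mult_const using \<rho> \<open>0 < Z\<close> by (simp add: ln_powr)
  then show ?thesis
    unfolding saddle_obj_eq_tilted_row sum_tilted_row_tilted_output[OF \<rho>] Z_def[symmetric]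
      E_o_eq_minus_ln_gallager_Z
    using \<open>0 < Z\<close> by simp
qed

lemma saddle_obj_tilted_output_le:
  assumes \<rho>s: "0 \<le> \<rho>s" and \<rho>: "0 \<le> \<rho>"
  defines "r \<equiv> tilted_rate W \<rho>s"
  shows "saddle_obj W r \<rho> (tilted_output W \<rho>s) \<le> ereal (E_o W \<rho>s unif - \<rho>s * r)"
proof -
  let ?V = "tilted_channel W \<rho>s" and ?q = "tilted_output W \<rho>s"
  define a where "a x = (\<Sum>y\<in>UNIV. tilted_row W \<rho> ?q x y)" for x
  have supp: "\<forall>y. ?V x y \<noteq> 0 \<longrightarrow> 0 < W x y \<and> 0 < ?q y" for x
    using tilted_channel_eq_0_iff[OF channel] channel_nonneg[OF channel] tilted_output_pos[OF channel]
    by (metis order_less_le)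
  have gibbs_hyps: "\<forall>y. 0 \<le> ?V x y" "sum (?V x) UNIV = 1" "\<forall>y. 0 \<le> tilted_row W \<rho> ?q x y"
    "\<forall>y. 0 < ?V x y \<longrightarrow> 0 < tilted_row W \<rho> ?q x y" for x
    using tilted_channel_nonneg[OF channel] channel_sum[OF channel_tilted_channel[OF \<rho>s]]
      tilted_row_nonneg[OF pdist_tilted_output[OF channel]] supp[of x]
    by (auto intro: tilted_row_pos)
  have "0 < a x" for x unfolding a_def by (rule gibbs_slack(1)[OF gibbs_hyps])
  have row: "- (1 + \<rho>) * ln (a x) \<le> E_o W \<rho>s unif - \<rho>s * r + \<rho> * r" for x
  proof -
    have "(1 + \<rho>) * - ln (a x) \<le> (1 + \<rho>) * kl_real (?V x) (tilted_row W \<rho> ?q x)"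
      using gibbs_inequality[OF gibbs_hyps] \<rho> unfolding a_def by (intro mult_left_mono) auto
    also have "\<dots> = kl_real (?V x) (W x) + \<rho> * kl_real (?V x) ?q"
      using kl_real_tilted_row[of \<rho> "?V x" W x ?q, OF \<rho> _ supp] tilted_channel_nonneg[OF channel]
      by simp
    also have "\<dots> = E_o W \<rho>s unif - \<rho>s * r + \<rho> * r"
      unfolding kl_real_tilted_channel_W[OF \<rho>s] kl_real_tilted_channel_output[OF \<rho>s] r_def ..
    finally show ?thesis by (simp only: mult_minus_left mult_minus_right)
  qed
  have pointwise: "unif x * (- (1 + \<rho>) * ln (a x)) \<le> unif x * (E_o W \<rho>s unif - \<rho>s * r + \<rho> * r)"
    for x using row[of x] unif_pos[of x] by (intro mult_left_mono) auto
  have "(\<Sum>x\<in>UNIV. unif x * (- (1 + \<rho>) * ln (a x)))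
      \<le> (\<Sum>x\<in>UNIV. (unif :: 'x \<Rightarrow> real) x * (E_o W \<rho>s unif - \<rho>s * r + \<rho> * r))"
    by (rule sum_mono) (rule pointwise)
  moreover have "(\<Sum>x\<in>UNIV. unif x * (- (1 + \<rho>) * ln (a x)))
      = - (1 + \<rho>) * (\<Sum>x\<in>UNIV. unif x * ln (a x))"
    by (simp add: sum_distrib_left mult_ac)
  ultimately have "- (1 + \<rho>) * (\<Sum>x\<in>UNIV. unif x * ln (a x)) \<le> E_o W \<rho>s unif - \<rho>s * r + \<rho> * r"
    unfolding sum_unif_mult_const by simp
  then have "- \<rho> * r - (1 + \<rho>) * (\<Sum>x\<in>UNIV. unif x * ln (a x)) \<le> E_o W \<rho>s unif - \<rho>s * r"
    by (simp only: mult_minus_left)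
  moreover have "\<not> (\<exists>x. a x = 0)" using \<open>\<And>x. 0 < a x\<close> by (metis less_irrefl)
  ultimately show ?thesis unfolding saddle_obj_eq_tilted_row a_def[symmetric] by simp
qed

lemma INF_saddle_obj:
  assumes "0 \<le> \<rho>"
  shows "(INF q\<in>{q. pdist q}. saddle_obj W R \<rho> q) = ereal (E_o W \<rho> unif - \<rho> * R)"
proof (rule antisym)
  show "(INF q\<in>{q. pdist q}. saddle_obj W R \<rho> q) \<le> ereal (E_o W \<rho> unif - \<rho> * R)"
    using pdist_tilted_output[OF channel] saddle_obj_tilted_output[OF assms]
    by (metis (mono_tags) INF_lower mem_Collect_eq)
  show "ereal (E_o W \<rho> unif - \<rho> * R) \<le> (INF q\<in>{q. pdist q}. saddle_obj W R \<rho> q)"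
    using E_o_minus_rate_le_saddle_obj(1) assms by (intro INF_greatest) simp
qed

lemma SUP_INF_saddle_obj:
  "(SUP \<rho>\<in>{0..}. INF q\<in>{q. pdist q}. saddle_obj W R \<rho> q) = E_SP_tilde_Q W R unif"
  unfolding E_SP_tilde_Q_def by (rule SUP_cong) (auto simp: INF_saddle_obj)

lemma is_saddle_rho_opt:
  assumes "R_inf W < R" and "R < capacity W"
  shows "is_saddle W R (rho_opt W R) (tilted_output W (rho_opt W R))"
proof -
  define p where "p = rho_opt W R"
  have opt: "optimal_rho W R p" unfolding p_def by (rule optimal_rho_rho_opt[OF assms(1)])
  then have "0 \<le> p" unfolding optimal_rho_def by simp
  have rate: "tilted_rate W p = R" by (rule tilted_rate_optimal_rho(2)[OF opt assms(2)])
  show ?thesis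
    unfolding is_saddle_def p_def[symmetric]
  proof (intro conjI allI impI)
    show "0 \<le> p" "pdist (tilted_output W p)" using \<open>0 \<le> p\<close> pdist_tilted_output[OF channel] by auto
    fix \<rho> :: real and q :: "'y \<Rightarrow> real" assume "0 \<le> \<rho>" and "pdist q"
    show "saddle_obj W R \<rho> (tilted_output W p) \<le> saddle_obj W R p (tilted_output W p)"
      using saddle_obj_tilted_output_le[OF \<open>0 \<le> p\<close> \<open>0 \<le> \<rho>\<close>]
      unfolding rate saddle_obj_tilted_output[OF \<open>0 \<le> p\<close>] .
    show "saddle_obj W R p (tilted_output W p) \<le> saddle_obj W R p q"
      unfolding saddle_obj_tilted_output[OF \<open>0 \<le> p\<close>]
      by (rule E_o_minus_rate_le_saddle_obj(1)[OF \<open>pdist q\<close> \<open>0 \<le> p\<close>])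
  qed
qed

lemma is_saddle_unique:
  assumes R: "R_inf W < R" "R < capacity W" and saddle: "is_saddle W R \<rho> q"
  shows "\<rho> = rho_opt W R" and "q = tilted_output W \<rho>"
proof -
  have \<rho>: "0 \<le> \<rho>" and q: "pdist q"
    and max: "\<And>\<rho>'. 0 \<le> \<rho>' \<Longrightarrow> saddle_obj W R \<rho>' q \<le> saddle_obj W R \<rho> q"
    and min: "\<And>q'. pdist q' \<Longrightarrow> saddle_obj W R \<rho> q \<le> saddle_obj W R \<rho> q'"
    using saddle pdist_tilted_output[OF channel] unfolding is_saddle_def by blast+
  have upper: "saddle_obj W R \<rho> q \<le> ereal (E_o W \<rho> unif - \<rho> * R)"
    using min[OF pdist_tilted_output[OF channel, of \<rho>]] saddle_obj_tilted_output[OF \<rho>] by simp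
  have saddle_value: "saddle_obj W R \<rho> q = ereal (E_o W \<rho> unif - \<rho> * R)"
    by (rule antisym[OF upper E_o_minus_rate_le_saddle_obj(1)[OF q \<rho>]])
  have "optimal_rho W R \<rho>"
    unfolding optimal_rho_def
  proof (intro conjI allI impI \<rho>)
    fix \<rho>' :: real assume "0 \<le> \<rho>'"
    have "ereal (E_o W \<rho>' unif - \<rho>' * R) \<le> saddle_obj W R \<rho>' q"
      by (rule E_o_minus_rate_le_saddle_obj(1)[OF q \<open>0 \<le> \<rho>'\<close>])
    also have "\<dots> \<le> ereal (E_o W \<rho> unif - \<rho> * R)" using max[OF \<open>0 \<le> \<rho>'\<close>] saddle_value by simp
    finally show "E_o W \<rho>' unif - \<rho>' * R \<le> E_o W \<rho> unif - \<rho> * R" by simp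
  qed
  then show "\<rho> = rho_opt W R" using optimal_rho_iff_eq_rho_opt[OF R(1)] by blast
  have "0 < \<rho>" by (rule tilted_rate_optimal_rho(1)[OF \<open>optimal_rho W R \<rho>\<close> R(2)])
  show "q = tilted_output W \<rho>"
    using E_o_minus_rate_le_saddle_obj(2)[OF q \<rho> \<open>0 < \<rho>\<close> saddle_value]
    unfolding tilted_output_def by blast
qed

end

theorem proposition1:
  fixes W :: "'x::finite \<Rightarrow> 'y::finite \<Rightarrow> real" and R :: real
  assumes "channel W" and "symmetric_channel W"
    and "R_cr W < capacity W"
    and "R_inf W < R" and "R < capacity W"
  shows "(E_SP W R = E_SP_Q W R unif \<and> E_SP_Q W R unif = E_SP_tilde_Q W R unif
            \<and> E_SP_tilde_Q W R unif = E_SP_tilde W R)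
       \<and> (\<forall>\<rho>\<ge>0. \<forall>x. (\<Sum>y\<in>UNIV. W x y powr (1 / (1 + \<rho>)) *
              rpow (\<Sum>z\<in>UNIV. unif z * W z y powr (1 / (1 + \<rho>))) \<rho>)
           = (\<Sum>y\<in>UNIV. (\<Sum>z\<in>UNIV. unif z * W z y powr (1 / (1 + \<rho>))) powr (1 + \<rho>)))
       \<and> (0 \<le> rho_R W R \<and>
            ereal (E_o W (rho_R W R) unif - rho_R W R * R) = E_SP_tilde_Q W R unif)
       \<and> (E_SP_Q W R unif = (SUP \<rho>\<in>{0..}. INF q\<in>{q. pdist q}. saddle_obj W R \<rho> q)
            \<and> is_saddle W R (rho_R W R) (q_R W R)
            \<and> (\<forall>\<rho> q. is_saddle W R \<rho> q \<longrightarrow> \<rho> = rho_R W R \<and> q = q_R W R))"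
proof -
  obtain P where "symmetric_partition W P"
    using assms(2) symmetric_channel_iff by blast
  then interpret sym_channel W P using assms(1) by unfold_locales
  define \<rho> where "\<rho> = rho_opt W R"
  have opt: "optimal_rho W R \<rho>" unfolding \<rho>_def by (rule optimal_rho_rho_opt[OF assms(4)])
  have rate: "tilted_rate W \<rho> = R" by (rule tilted_rate_optimal_rho(2)[OF opt assms(5)])
  have rho_R: "rho_R W R = \<rho>" unfolding \<rho>_def by (rule rho_R_eq_rho_opt[OF assms(4,5)])
  have "0 \<le> \<rho>" using opt unfolding optimal_rho_def by simp
  show ?thesis
    unfolding q_R_eq_tilted_output rho_R SUP_INF_saddle_obj
      E_SP_eq_E_o[OF opt rate] E_SP_Q_unif_eq[OF opt assms(5)] E_SP_tilde_Q_unif_eq[OF opt]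
      E_SP_tilde_eq_E_o[OF opt rate]
  proof (intro conjI allI impI)
    show "(\<Sum>y\<in>UNIV. W x y powr (1 / (1 + \<rho>')) *
        rpow (\<Sum>z\<in>UNIV. unif z * W z y powr (1 / (1 + \<rho>'))) \<rho>')
      = (\<Sum>y\<in>UNIV. (\<Sum>z\<in>UNIV. unif z * W z y powr (1 / (1 + \<rho>'))) powr (1 + \<rho>'))"
      if "0 \<le> \<rho>'" for \<rho>' x
      using row_sum_tilt_eq_gallager_Z[OF that] unfolding gallager_alpha_def gallager_Z_def .
    show "is_saddle W R \<rho> (tilted_output W \<rho>)"
      unfolding \<rho>_def by (rule is_saddle_rho_opt[OF assms(4,5)])
    show "\<rho>' = \<rho>" "q = tilted_output W \<rho>" if "is_saddle W R \<rho>' q" for \<rho>' q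
      using is_saddle_unique[OF assms(4,5) that] unfolding \<rho>_def by simp_all
  qed (use \<open>0 \<le> \<rho>\<close> in simp_all)
qed

end
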